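(* Let $k\ge k_0:=\max\{\lceil d/2\rceil,1\}$, let $x^*$ be an optimizer of $(\mathrm{SOS}_k)$ and $(y^*,z^* )$ an optimizer of $(\mathrm{MOM}_k)$. Suppose $f_k^{sos}=f_k^{mom}$ and there exists an integer $t\in[k_0,k]$ with $\operatorname{rank}M_t[z^*]=\operatorname{rank}M_{t-1}[z^*]$ (flat truncation). Then $x^*$ is a minimizer of $(\mathrm{P})$ and $c^Tx^*=f^{\min}$. (Equivalently: if the semidefinite relaxation algorithm that increases $k$ from $k_0$ until these two conditions hold terminates, its output is the correct optimizer and optimal value of $(\mathrm{P})$.)
   Context: Let $\xi=(\xi_1,\dots,\xi_r)$ and let $[\xi]_d$ be the vector of all monomials in $\xi$ of degree at most $d$, graded/alphabetically ordered, indexed by $\mathbb{N}^r_d=\{\alpha\in\mathbb{N}^r:|\alpha|\le d\}$. Let $A$ be a real $|\mathbb{N}^r_d|\times n$ matrix, $b\in\mathbb{R}^{\mathbb{N}^r_d}$, $c\in\mathbb{R}^n$. Let $X\subseteq\mathbb{R}^n$ be a closed convex set with dual cone $X^*$. Fix $\Gamma>0$, $\mu\in\mathbb{R}^r$, positive definite $\Lambda$, $g(\xi)=\Gamma-(\xi-\mu)^T\Lambda^{-1}(\xi-\mu)$, $U=\{\xi:g(\xi)\ge0\}$. $\mathbb{R}[\xi]_t$: polynomials of degree $\le t$; $\Sigma[\xi]_t$: SOS polynomials in $\mathbb{R}[\xi]_t$; $\mathscr{P}_d(U)=\{p\in\mathbb{R}[\xi]_d:p\ge0\text{ on }U\}$;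 $\mathrm{QM}[g]_{2k}=\Sigma[\xi]_{2k}+g\cdot\Sigma[\xi]_{2k-2}$. For $z\in\mathbb{R}^{\mathbb{N}^r_{2k}}$: $\mathscr{L}_z(\sum p_\alpha\xi^\alpha)=\sum p_\alpha z_\alpha$; moment matrix $M_t[z]$ ($t\le k$) with $\mathrm{vec}(a_1)^TM_t[z]\mathrm{vec}(a_2)=\mathscr{L}_z(a_1a_2)$ for $a_1,a_2\in\mathbb{R}[\xi]_t$; localizing matrix $L_g^{(k)}[z]$ with $\mathrm{vec}(a_1)^TL_g^{(k)}[z]\mathrm{vec}(a_2)=\mathscr{L}_z(ga_1a_2)$ for $a_1,a_2\in\mathbb{R}[\xi]_{k-1}$; $\mathscr{S}[g]_{2k}=\{z: M_k[z]\succeq0, L_g^{(k)}[z]\succeq0\}$; $z|_d=(z_\alpha)_{|\alpha|\le d}$. $(\mathrm{P})$: $f^{\min}=\min_{x\in X}c^Tx$ s.t. $(Ax+b)^T[\xi]_d\in\mathscr{P}_d(U)$. $(\mathrm{SOS}_k)$: $f_k^{sos}=\min_{x\in X}c^Tx$ s.t. $(Ax+b)^T[\xi]_d\in\mathrm{QM}[g]_{2k}\cap\mathbb{R}[\xi]_d$. $(\mathrm{MOM}_k)$: $f_k^{mom}=\max -b^Ty$ s.t. $c-A^Ty\in X^*$, $y=z|_d$, $z\in\mathscr{S}[g]_{2k}$. *)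

theory Defs
  imports "HOL-Analysis.Analysis"
begin

text \<open>Exponent vectors alpha in N^r are functions 'r => nat ('r a finite index type,
  r = CARD('r)). A polynomial is its coefficient function (('r => nat) => real).\<close>

definition mdeg :: "('r::finite \<Rightarrow> nat) \<Rightarrow> nat" where
  "mdeg \<alpha> = (\<Sum>i\<in>UNIV. \<alpha> i)"

definition mons :: "nat \<Rightarrow> ('r::finite \<Rightarrow> nat) set" where
  "mons t = {\<alpha>. mdeg \<alpha> \<le> t}"

definition deg_le :: "nat \<Rightarrow> (('r::finite \<Rightarrow> nat) \<Rightarrow> real) \<Rightarrow> bool" where
  "deg_le t p \<longleftrightarrow> (\<forall>\<alpha>. t < mdeg \<alpha> \<longrightarrow> p \<alpha> = 0)"

definition monom_eval :: "('r::finite \<Rightarrow> nat) \<Rightarrow> real^'r \<Rightarrow> real" where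
  "monom_eval \<alpha> \<xi> = (\<Prod>i\<in>UNIV. (\<xi> $ i) ^ \<alpha> i)"

definition peval :: "nat \<Rightarrow> (('r::finite \<Rightarrow> nat) \<Rightarrow> real) \<Rightarrow> real^'r \<Rightarrow> real" where
  "peval t p \<xi> = (\<Sum>\<alpha>\<in>mons t. p \<alpha> * monom_eval \<alpha> \<xi>)"

definition pmul :: "(('r::finite \<Rightarrow> nat) \<Rightarrow> real) \<Rightarrow> (('r \<Rightarrow> nat) \<Rightarrow> real) \<Rightarrow> ('r \<Rightarrow> nat) \<Rightarrow> real" where
  "pmul p q \<alpha> = (\<Sum>\<beta>\<in>{\<beta>. \<forall>i. \<beta> i \<le> \<alpha> i}. p \<beta> * q (\<lambda>i. \<alpha> i - \<beta> i))"

definition pconst :: "real \<Rightarrow> ('r::finite \<Rightarrow> nat) \<Rightarrow> real" where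
  "pconst a \<alpha> = (if \<alpha> = (\<lambda>_. 0) then a else 0)"

definition pvar :: "'r::finite \<Rightarrow> ('r \<Rightarrow> nat) \<Rightarrow> real" where
  "pvar i \<alpha> = (if \<alpha> = (\<lambda>j. if j = i then 1 else 0) then 1 else 0)"

definition pos_def_mat :: "real^'r^'r \<Rightarrow> bool" where
  "pos_def_mat L \<longleftrightarrow> transpose L = L \<and> (\<forall>v. v \<noteq> 0 \<longrightarrow> 0 < v \<bullet> (L *v v))"

definition gfun :: "real \<Rightarrow> real^'r \<Rightarrow> real^'r^'r \<Rightarrow> real^'r \<Rightarrow> real" where
  "gfun Gam mu Lam \<xi> = Gam - (\<xi> - mu) \<bullet> (matrix_inv Lam *v (\<xi> - mu))"

definition gpoly :: "real \<Rightarrow> real^'r \<Rightarrow> real^'r^'r \<Rightarrow> ('r::finite \<Rightarrow> nat) \<Rightarrow> real" where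
  "gpoly Gam mu Lam \<alpha> = pconst Gam \<alpha> -
     (\<Sum>i\<in>UNIV. \<Sum>j\<in>UNIV. (matrix_inv Lam $ i $ j) *
        pmul (\<lambda>\<beta>. pvar i \<beta> - pconst (mu $ i) \<beta>) (\<lambda>\<beta>. pvar j \<beta> - pconst (mu $ j) \<beta>) \<alpha>)"

definition Uset :: "real \<Rightarrow> real^'r \<Rightarrow> real^'r^'r \<Rightarrow> (real^'r) set" where
  "Uset Gam mu Lam = {\<xi>. 0 \<le> gfun Gam mu Lam \<xi>}"

definition sos :: "nat \<Rightarrow> (('r::finite \<Rightarrow> nat) \<Rightarrow> real) \<Rightarrow> bool" where
  "sos t s \<longleftrightarrow> (\<exists>qs. (\<forall>q\<in>set qs. deg_le t q) \<and> s = (\<lambda>\<alpha>. \<Sum>q\<leftarrow>qs. pmul q q \<alpha>))"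

definition QM :: "real \<Rightarrow> real^'r \<Rightarrow> real^'r^'r \<Rightarrow> nat \<Rightarrow> (('r::finite \<Rightarrow> nat) \<Rightarrow> real) \<Rightarrow> bool" where
  "QM Gam mu Lam k p \<longleftrightarrow> (\<exists>s0 s1. sos k s0 \<and> sos (k - 1) s1 \<and>
      p = (\<lambda>\<alpha>. s0 \<alpha> + pmul (gpoly Gam mu Lam) s1 \<alpha>))"

definition Pnonneg :: "real \<Rightarrow> real^'r \<Rightarrow> real^'r^'r \<Rightarrow> nat \<Rightarrow> (('r::finite \<Rightarrow> nat) \<Rightarrow> real) \<Rightarrow> bool" where
  "Pnonneg Gam mu Lam d p \<longleftrightarrow> deg_le d p \<and> (\<forall>\<xi>\<in>Uset Gam mu Lam. 0 \<le> peval d p \<xi>)"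

definition psd_on :: "'a set \<Rightarrow> ('a \<Rightarrow> 'a \<Rightarrow> real) \<Rightarrow> bool" where
  "psd_on I M \<longleftrightarrow> (\<forall>i\<in>I. \<forall>j\<in>I. M i j = M j i) \<and>
     (\<forall>v. 0 \<le> (\<Sum>i\<in>I. \<Sum>j\<in>I. v i * M i j * v j))"

definition cols_indep :: "'a set \<Rightarrow> ('a \<Rightarrow> 'a \<Rightarrow> real) \<Rightarrow> 'a set \<Rightarrow> bool" where
  "cols_indep I M J \<longleftrightarrow>
     (\<forall>c. (\<forall>i\<in>I. (\<Sum>j\<in>J. c j * M i j) = 0) \<longrightarrow> (\<forall>j\<in>J. c j = 0))"

definition rank_on :: "'a set \<Rightarrow> ('a \<Rightarrow> 'a \<Rightarrow> real) \<Rightarrow> nat" where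
  "rank_on I M = Max {card J | J. J \<subseteq> I \<and> cols_indep I M J}"

definition moment_mat :: "(('r::finite \<Rightarrow> nat) \<Rightarrow> real) \<Rightarrow> ('r \<Rightarrow> nat) \<Rightarrow> ('r \<Rightarrow> nat) \<Rightarrow> real" where
  "moment_mat z \<beta> \<gamma> = z (\<lambda>i. \<beta> i + \<gamma> i)"

definition loc_mat :: "real \<Rightarrow> real^'r \<Rightarrow> real^'r^'r \<Rightarrow> (('r::finite \<Rightarrow> nat) \<Rightarrow> real) \<Rightarrow> ('r \<Rightarrow> nat) \<Rightarrow> ('r \<Rightarrow> nat) \<Rightarrow> real" where
  "loc_mat Gam mu Lam z \<beta> \<gamma> = (\<Sum>\<alpha>\<in>mons 2. gpoly Gam mu Lam \<alpha> * z (\<lambda>i. \<alpha> i + \<beta> i + \<gamma> i))"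

definition Sg :: "real \<Rightarrow> real^'r \<Rightarrow> real^'r^'r \<Rightarrow> nat \<Rightarrow> (('r::finite \<Rightarrow> nat) \<Rightarrow> real) \<Rightarrow> bool" where
  "Sg Gam mu Lam k z \<longleftrightarrow> deg_le (2 * k) z \<and>
     psd_on (mons k) (moment_mat z) \<and> psd_on (mons (k - 1)) (loc_mat Gam mu Lam z)"

text \<open>coefficient vector of (Ax+b)^T [xi]_d\<close>
definition affpoly :: "nat \<Rightarrow> (('r::finite \<Rightarrow> nat) \<Rightarrow> real^'n) \<Rightarrow> (('r \<Rightarrow> nat) \<Rightarrow> real) \<Rightarrow> real^'n \<Rightarrow> ('r \<Rightarrow> nat) \<Rightarrow> real" where
  "affpoly d A b x \<alpha> = (if mdeg \<alpha> \<le> d then A \<alpha> \<bullet> x + b \<alpha> else 0)"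

definition dual_cone :: "(real^'n) set \<Rightarrow> (real^'n) set" where
  "dual_cone X = {y. \<forall>x\<in>X. 0 \<le> y \<bullet> x}"

definition P_feas where
  "P_feas d A b X Gam mu Lam x \<longleftrightarrow> x \<in> X \<and> Pnonneg Gam mu Lam d (affpoly d A b x)"

definition f_min where
  "f_min d A b c X Gam mu Lam = (INF x\<in>{x. P_feas d A b X Gam mu Lam x}. c \<bullet> x)"

definition P_minimizer where
  "P_minimizer d A b c X Gam mu Lam x \<longleftrightarrow> P_feas d A b X Gam mu Lam x \<and>
     (\<forall>x'. P_feas d A b X Gam mu Lam x' \<longrightarrow> c \<bullet> x \<le> c \<bullet> x')"

definition SOS_feas where
  "SOS_feas k d A b X Gam mu Lam x \<longleftrightarrow> x \<in> X \<and> QM Gam mu Lam k (affpoly d A b x)"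

definition f_sos where
  "f_sos k d A b c X Gam mu Lam = (INF x\<in>{x. SOS_feas k d A b X Gam mu Lam x}. c \<bullet> x)"

definition SOS_optimizer where
  "SOS_optimizer k d A b c X Gam mu Lam x \<longleftrightarrow> SOS_feas k d A b X Gam mu Lam x \<and>
     (\<forall>x'. SOS_feas k d A b X Gam mu Lam x' \<longrightarrow> c \<bullet> x \<le> c \<bullet> x')"

definition trunc :: "nat \<Rightarrow> (('r::finite \<Rightarrow> nat) \<Rightarrow> real) \<Rightarrow> ('r \<Rightarrow> nat) \<Rightarrow> real" where
  "trunc d z \<alpha> = (if mdeg \<alpha> \<le> d then z \<alpha> else 0)"

definition MOM_feas where
  "MOM_feas k d (A :: ('r::finite \<Rightarrow> nat) \<Rightarrow> real^'n) c X Gam mu Lam y z \<longleftrightarrow>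
     c - (\<Sum>\<alpha>\<in>mons d. y \<alpha> *\<^sub>R A \<alpha>) \<in> dual_cone X \<and> y = trunc d z \<and> Sg Gam mu Lam k z"

definition mom_obj :: "nat \<Rightarrow> (('r::finite \<Rightarrow> nat) \<Rightarrow> real) \<Rightarrow> (('r \<Rightarrow> nat) \<Rightarrow> real) \<Rightarrow> real" where
  "mom_obj d b y = - (\<Sum>\<alpha>\<in>mons d. b \<alpha> * y \<alpha>)"

definition f_mom where
  "f_mom k d A b c X Gam mu Lam =
     (SUP yz\<in>{(y, z). MOM_feas k d A c X Gam mu Lam y z}. mom_obj d b (fst yz))"

definition MOM_optimizer where
  "MOM_optimizer k d A b c X Gam mu Lam y z \<longleftrightarrow> MOM_feas k d A c X Gam mu Lam y z \<and>
     (\<forall>y' z'. MOM_feas k d A c X Gam mu Lam y' z' \<longrightarrow> mom_obj d b y' \<le> mom_obj d b y)"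

end

theory Submission
  imports Defs "HOL-Library.Function_Algebras" "HOL-Computational_Algebra.Fundamental_Theorem_Algebra"
begin

text \<open>
  Flat truncation forces the truncated moment vector to come from a finitely atomic measure on U,
  in the spirit of Curto and Fialkow. Choose a maximal set J of linearly independent columns of
  M_{t-1}[z]; by flatness these columns also span the columns of M_t[z], so the form
  <x, y> = sum_{j,l in J} x_j z_{j+l} y_l is positive definite on R^J, and multiplication by each
  coordinate xi_i induces a family of commuting self-adjoint operators on R^J. Decomposing the
  coefficient vector of the constant polynomial 1 into joint eigenvectors w_u, with joint eigenvalue
  u in R^r, gives z_alpha = sum_u lambda_u u^alpha for |alpha| <= 2t with weights
  lambda_u = <w_u, w_u> >= 0, and the localizing matrix, tested on w_u, puts every atom with
  lambda_u > 0 into U. Hence L_z is nonnegative on P_d(U): this is weak duality between (P) and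
  (MOM_k), and together with f_k^sos = f_k^mom and the inclusion of the SOS-feasible set in the
  feasible set of (P) it makes x* optimal for (P).
\<close>

lemma sum_fun_apply: "(\<Sum>k\<in>K. f k) l = (\<Sum>k\<in>K. f k l)"
  by (induction K rule: infinite_finite_induct) auto

definition supp_on :: "'a set \<Rightarrow> ('a \<Rightarrow> real) set" where
  "supp_on J = {x. \<forall>l. l \<notin> J \<longrightarrow> x l = 0}"

definition fscale :: "real \<Rightarrow> ('a \<Rightarrow> real) \<Rightarrow> ('a \<Rightarrow> real)" where
  "fscale c x = (\<lambda>l. c * x l)"

definition linear_op :: "(('a \<Rightarrow> real) \<Rightarrow> ('a \<Rightarrow> real)) \<Rightarrow> bool" where
  "linear_op T \<longleftrightarrow> (\<forall>x y. T (x + y) = T x + T y) \<and> (\<forall>c x. T (fscale c x) = fscale c (T x))"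

definition gram_form ::
    "'a set \<Rightarrow> ('a \<Rightarrow> 'a \<Rightarrow> real) \<Rightarrow> ('a \<Rightarrow> real) \<Rightarrow> ('a \<Rightarrow> real) \<Rightarrow> real" where
  "gram_form J G x y = (\<Sum>j\<in>J. \<Sum>l\<in>J. x j * G j l * y l)"

lemma fscale_apply [simp]: "fscale c x l = c * x l"
  by (simp add: fscale_def)

lemma fscale_simps [simp]: "fscale 0 x = 0" "fscale c 0 = 0" "fscale 1 x = x"
  by (auto simp: fscale_def fun_eq_iff)

lemma fscale_fscale: "fscale a (fscale b x) = fscale (a * b) x"
  by (auto simp: fscale_def fun_eq_iff)

lemma fscale_sum: "fscale c (\<Sum>k\<in>K. f k) = (\<Sum>k\<in>K. fscale c (f k))"
  by (auto simp: fun_eq_iff sum_fun_apply sum_distrib_left)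

lemma linear_op_add: "linear_op T \<Longrightarrow> T (x + y) = T x + T y"
  by (simp add: linear_op_def)

lemma linear_op_fscale: "linear_op T \<Longrightarrow> T (fscale c x) = fscale c (T x)"
  by (simp add: linear_op_def)

lemma linear_op_zero: "linear_op T \<Longrightarrow> T 0 = 0"
  using linear_op_fscale[of T 0 0] by simp

lemma linear_op_diff: "linear_op T \<Longrightarrow> T (x - y) = T x - T y"
  using linear_op_add[of T "x - y" y] by simp

lemma linear_op_sum: "linear_op T \<Longrightarrow> T (\<Sum>k\<in>K. f k) = (\<Sum>k\<in>K. T (f k))"
  by (induction K rule: infinite_finite_induct) (auto simp: linear_op_zero linear_op_add)

lemma linear_op_lincomb:
  assumes "linear_op T"
  shows "T (\<lambda>l. \<Sum>k\<in>K. c k * f k l) = (\<lambda>l. \<Sum>k\<in>K. c k * T (f k) l)"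
proof -
  have e: "(\<lambda>l. \<Sum>k\<in>K. c k * f k l) = (\<Sum>k\<in>K. fscale (c k) (f k))"
    by (auto simp: fun_eq_iff sum_fun_apply)
  show ?thesis
    unfolding e linear_op_sum[OF assms] linear_op_fscale[OF assms] by (auto simp: fun_eq_iff sum_fun_apply)
qed

lemma linear_op_funpow: "linear_op T \<Longrightarrow> linear_op (T ^^ n)"
  by (induction n) (auto simp: linear_op_def)

lemma supp_on_add: "x \<in> supp_on J \<Longrightarrow> y \<in> supp_on J \<Longrightarrow> x + y \<in> supp_on J"
  and supp_on_diff: "x \<in> supp_on J \<Longrightarrow> y \<in> supp_on J \<Longrightarrow> x - y \<in> supp_on J"
  and supp_on_fscale: "x \<in> supp_on J \<Longrightarrow> fscale c x \<in> supp_on J"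
  by (simp_all add: supp_on_def)

lemma supp_on_sum: "(\<And>k. k \<in> K \<Longrightarrow> f k \<in> supp_on J) \<Longrightarrow> (\<Sum>k\<in>K. f k) \<in> supp_on J"
  by (simp add: supp_on_def sum_fun_apply)

lemma gram_form_add_left: "gram_form J G (x + y) z = gram_form J G x z + gram_form J G y z"
  and gram_form_add_right: "gram_form J G z (x + y) = gram_form J G z x + gram_form J G z y"
  and gram_form_diff_left: "gram_form J G (x - y) z = gram_form J G x z - gram_form J G y z"
  and gram_form_diff_right: "gram_form J G z (x - y) = gram_form J G z x - gram_form J G z y"
  and gram_form_fscale_left: "gram_form J G (fscale c x) z = c * gram_form J G x z"
  and gram_form_fscale_right: "gram_form J G z (fscale c x) = c * gram_form J G z x"
  by (simp_all add: gram_form_def algebra_simps sum.distrib sum_subtractf sum_distrib_left)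

lemma gram_form_zero [simp]:
  "gram_form J G 0 z = 0" "gram_form J G z 0 = 0"
  "gram_form J G (\<lambda>_. 0) z = 0" "gram_form J G z (\<lambda>_. 0) = 0"
  by (simp_all add: gram_form_def)

lemma gram_form_sum_left: "gram_form J G (\<Sum>k\<in>K. f k) z = (\<Sum>k\<in>K. gram_form J G (f k) z)"
  by (induction K rule: infinite_finite_induct)
    (simp_all del: plus_fun_apply add: gram_form_add_left zero_fun_def[symmetric])

lemma gram_form_sum_right: "gram_form J G z (\<Sum>k\<in>K. f k) = (\<Sum>k\<in>K. gram_form J G z (f k))"
  by (induction K rule: infinite_finite_induct)
    (simp_all del: plus_fun_apply add: gram_form_add_right zero_fun_def[symmetric])

definition poly_op ::
    "(('a \<Rightarrow> real) \<Rightarrow> ('a \<Rightarrow> real)) \<Rightarrow> real poly \<Rightarrow> ('a \<Rightarrow> real) \<Rightarrow> ('a \<Rightarrow> real)" where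
  "poly_op T p x = (\<lambda>l. \<Sum>i\<le>degree p. coeff p i * (T ^^ i) x l)"

lemma poly_op_degree_le: "degree p \<le> n \<Longrightarrow> poly_op T p x = (\<lambda>l. \<Sum>i\<le>n. coeff p i * (T ^^ i) x l)"
  unfolding poly_op_def by (rule ext, rule sum.mono_neutral_left) (auto simp: coeff_eq_0)

lemma poly_op_0 [simp]: "poly_op T 0 x = 0"
  by (simp add: poly_op_def fun_eq_iff)

lemma poly_op_const: "poly_op T [:c:] x = fscale c x"
  by (simp add: poly_op_def fun_eq_iff)

lemma poly_op_1: "poly_op T 1 x = x"
  using poly_op_const[of T 1 x] by (simp add: one_pCons)

lemma poly_op_add: "poly_op T (p + q) x = poly_op T p x + poly_op T q x"
proof -
  let ?n = "max (degree p) (degree q)"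
  have "degree (p + q) \<le> ?n" by (rule degree_add_le) auto
  then show ?thesis
    by (simp add: poly_op_degree_le[of _ ?n] fun_eq_iff algebra_simps sum.distrib)
qed

lemma poly_op_smult: "poly_op T (smult c p) x = fscale c (poly_op T p x)"
  using poly_op_degree_le[of "smult c p" "degree p"]
  by (simp add: poly_op_def fun_eq_iff sum_distrib_left algebra_simps)

lemma poly_op_pCons:
  assumes "linear_op T"
  shows "poly_op T (pCons a p) x = fscale a x + T (poly_op T p x)"
proof -
  have "poly_op T (pCons a p) x = (\<lambda>l. \<Sum>i\<le>Suc (degree p). coeff (pCons a p) i * (T ^^ i) x l)"
    by (rule poly_op_degree_le) (simp add: degree_pCons_le)
  also have "\<dots> = (\<lambda>l. a * x l + (\<Sum>i\<le>degree p. coeff p i * (T ^^ Suc i) x l))"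
    by (simp only: sum.atMost_Suc_shift coeff_pCons_0 coeff_pCons_Suc) simp
  also have "\<dots> = fscale a x + T (poly_op T p x)"
    unfolding poly_op_def linear_op_lincomb[OF assms] by (auto simp: fun_eq_iff)
  finally show ?thesis .
qed

lemma poly_op_linear_factor: "linear_op T \<Longrightarrow> poly_op T [:- c, 1:] x = T x - fscale c x"
  by (simp add: poly_op_pCons poly_op_const fun_eq_iff)

lemma poly_op_quadratic:
  "linear_op T \<Longrightarrow> poly_op T [:c, b, 1:] x = fscale c x + fscale b (T x) + T (T x)"
  by (simp add: poly_op_pCons poly_op_const linear_op_add linear_op_fscale fun_eq_iff)

lemma poly_op_mult:
  assumes "linear_op T"
  shows "poly_op T (p * q) x = poly_op T p (poly_op T q x)"
proof (induction p rule: pCons_induct)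
  case (pCons a p)
  have "poly_op T (pCons a p * q) x = poly_op T (smult a q + pCons 0 (p * q)) x" by simp
  also have "\<dots> = fscale a (poly_op T q x) + T (poly_op T p (poly_op T q x))"
    by (simp add: poly_op_add poly_op_smult poly_op_pCons[OF assms] pCons.IH)
  finally show ?case by (simp add: poly_op_pCons[OF assms])
qed simp

lemma linear_op_poly_op:
  assumes "linear_op T"
  shows "linear_op (poly_op T p)"
  unfolding linear_op_def poly_op_def
  using linear_op_add[OF linear_op_funpow[OF assms]] linear_op_fscale[OF linear_op_funpow[OF assms]]
  by (auto simp: fun_eq_iff sum.distrib algebra_simps sum_distrib_left)

lemma poly_op_eigvec:
  assumes "linear_op T" and "T y = fscale \<mu> y"
  shows "poly_op T p y = fscale (poly p \<mu>) y"
proof (induction p rule: pCons_induct)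
  case (pCons a p)
  have "poly_op T (pCons a p) y = fscale a y + T (fscale (poly p \<mu>) y)"
    by (simp only: poly_op_pCons[OF assms(1)] pCons.IH)
  also have "\<dots> = fscale a y + fscale (poly p \<mu>) (fscale \<mu> y)"
    by (simp add: linear_op_fscale assms fun_eq_iff)
  finally show ?case by (simp add: fun_eq_iff algebra_simps)
qed simp

lemma poly_op_commute:
  assumes "linear_op S" and "\<And>x. S (T x) = T (S x)"
  shows "S (poly_op T p x) = poly_op T p (S x)"
proof -
  have "S ((T ^^ n) x) = (T ^^ n) (S x)" for n
    by (induction n) (simp_all add: assms(2))
  then show ?thesis
    unfolding poly_op_def linear_op_lincomb[OF assms(1)] by simp
qed

lemma poly_op_supp_on:
  assumes "\<And>x. x \<in> supp_on J \<Longrightarrow> T x \<in> supp_on J" and "x \<in> supp_on J"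
  shows "poly_op T p x \<in> supp_on J"
proof -
  have "(T ^^ i) x \<in> supp_on J" for i
    by (induction i) (simp_all add: assms)
  then show ?thesis by (auto simp: poly_op_def supp_on_def)
qed

definition cyclic_space ::
    "(('a \<Rightarrow> real) \<Rightarrow> ('a \<Rightarrow> real)) \<Rightarrow> ('a \<Rightarrow> real) \<Rightarrow> ('a \<Rightarrow> real) set" where
  "cyclic_space T v = range (\<lambda>p. poly_op T p v)"

lemma cyclic_spaceI: "poly_op T p v \<in> cyclic_space T v"
  by (simp add: cyclic_space_def)

lemma cyclic_space_self: "v \<in> cyclic_space T v"
  using cyclic_spaceI[of T 1 v] by (simp add: poly_op_1)

lemma cyclic_space_fscale: "x \<in> cyclic_space T v \<Longrightarrow> fscale c x \<in> cyclic_space T v"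
  by (auto simp: cyclic_space_def poly_op_smult[symmetric])

lemma cyclic_space_add: "x \<in> cyclic_space T v \<Longrightarrow> y \<in> cyclic_space T v \<Longrightarrow> x + y \<in> cyclic_space T v"
  by (auto simp: cyclic_space_def poly_op_add[symmetric])

lemma cyclic_space_diff:
  assumes "x \<in> cyclic_space T v" and "y \<in> cyclic_space T v"
  shows "x - y \<in> cyclic_space T v"
proof -
  have "x - y = x + fscale (-1) y" by (simp add: fun_eq_iff)
  then show ?thesis using assms cyclic_space_add cyclic_space_fscale by metis
qed

lemma cyclic_space_sum:
  assumes "\<And>k. k \<in> K \<Longrightarrow> f k \<in> cyclic_space T v"
  shows "(\<Sum>k\<in>K. f k) \<in> cyclic_space T v"
proof -
  have zero: "0 \<in> cyclic_space T v"
    using cyclic_spaceI[of T 0 v] by (simp only: poly_op_0)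
  show ?thesis using assms
    by (induction K rule: infinite_finite_induct)
      (auto simp: zero cyclic_space_add)
qed

lemma cyclic_space_trans:
  "linear_op T \<Longrightarrow> x \<in> cyclic_space T w \<Longrightarrow> w \<in> cyclic_space T v \<Longrightarrow> x \<in> cyclic_space T v"
  by (auto simp: cyclic_space_def poly_op_mult[symmetric])

lemma cyclic_space_eigvec:
  assumes "linear_op T" and "linear_op S" and "\<And>x. S (T x) = T (S x)" and "S w = fscale c w"
    and "x \<in> cyclic_space T w"
  shows "S x = fscale c x"
proof -
  obtain p where "x = poly_op T p w" using assms(5) by (auto simp: cyclic_space_def)
  then show ?thesis
    using poly_op_commute[of S T, OF assms(2,3)] assms(4) linear_op_fscale[OF linear_op_poly_op[OF assms(1)]]
    by simp
qed

lemma linear_op_resolvent_sum: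
  assumes lin: "linear_op T" and eig: "\<And>\<mu>. \<mu> \<in> M \<Longrightarrow> T (y \<mu>) = fscale \<mu> (y \<mu>)" and "c \<notin> M"
  defines "x \<equiv> (\<Sum>\<mu>\<in>M. fscale (1 / (\<mu> - c)) (y \<mu>))"
  shows "T x - fscale c x = (\<Sum>\<mu>\<in>M. y \<mu>)"
proof -
  have "T x - fscale c x = (\<Sum>\<mu>\<in>M. fscale (1 / (\<mu> - c)) (T (y \<mu>)) - fscale c (fscale (1 / (\<mu> - c)) (y \<mu>)))"
    unfolding x_def linear_op_sum[OF lin] linear_op_fscale[OF lin] fscale_sum sum_subtractf ..
  also have "\<dots> = (\<Sum>\<mu>\<in>M. y \<mu>)"
  proof (intro sum.cong refl)
    fix \<mu> assume "\<mu> \<in> M"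
    then have "\<mu> \<noteq> c" using \<open>c \<notin> M\<close> by blast
    then show "fscale (1 / (\<mu> - c)) (T (y \<mu>)) - fscale c (fscale (1 / (\<mu> - c)) (y \<mu>)) = y \<mu>"
      using \<open>\<mu> \<in> M\<close> by (simp add: eig fun_eq_iff divide_simps) (simp add: algebra_simps)
  qed
  finally show ?thesis .
qed

lemma map_poly_of_real_add:
  "map_poly of_real (p + q) = (map_poly of_real p + map_poly of_real q :: 'a::{comm_ring_1,real_algebra_1} poly)"
  by (rule poly_eqI) (simp add: coeff_map_poly)

lemma map_poly_of_real_mult:
  "map_poly of_real (p * q) = (map_poly of_real p * map_poly of_real q :: 'a::{comm_ring_1,real_algebra_1} poly)"
proof (induction p rule: pCons_induct)
  case (pCons a p)
  have "map_poly of_real (pCons a p * q) = map_poly of_real (smult a q + pCons 0 (p * q))" by simp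
  then show ?case
    by (simp add: map_poly_of_real_add map_poly_smult map_poly_pCons pCons.IH)
qed simp

lemma poly_map_poly_of_real: "poly (map_poly of_real p) (of_real x) = of_real (poly p x)"
  by (induction p) (auto simp: map_poly_pCons)

lemma real_poly_linear_or_quadratic_factor:
  fixes q :: "real poly"
  assumes "degree q > 0"
  obtains (linear) c r where "q = [:- c, 1:] * r"
    | (quadratic) a b r where "b \<noteq> 0" and "q = [:a\<^sup>2 + b\<^sup>2, - 2 * a, 1:] * r"
proof -
  let ?C = "map_poly complex_of_real"
  have "degree (?C q) = degree q" by (rule degree_map_poly) auto
  then have "\<not> constant (poly (?C q))" using assms by (simp add: constant_degree)
  then obtain z where z: "poly (?C q) z = 0" using fundamental_theorem_of_algebra by blast
  show thesis
  proof (cases "Im z = 0")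
    case True
    then have "z = of_real (Re z)" by (simp add: complex_eq_iff)
    then have "poly q (Re z) = 0"
      using z poly_map_poly_of_real[where 'a=complex, of q "Re z"] by simp
    then show thesis using linear by (metis dvdE poly_eq_0_iff_dvd)
  next
    case False
    define h where "h = [:(Re z)\<^sup>2 + (Im z)\<^sup>2, - 2 * Re z, 1:]"
    have hz: "poly (?C h) z = 0"
      by (simp add: h_def map_poly_pCons complex_eq_iff power2_eq_square algebra_simps)
    have "h \<noteq> 0" and "degree h = 2" by (simp_all add: h_def)
    then have ds: "degree (q mod h) \<le> 1"
      using degree_mod_less'[of h q] by (cases "q mod h = 0") auto
    define s0 s1 where "s0 = coeff (q mod h) 0" and "s1 = coeff (q mod h) 1"
    have s: "q mod h = [:s0, s1:]"
      using ds by (intro poly_eqI) (auto simp: s0_def s1_def coeff_pCons coeff_eq_0 split: nat.split)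
    have "q = q div h * h + q mod h" by simp
    then have "poly (?C (q mod h)) z = 0"
      using z hz map_poly_of_real_add map_poly_of_real_mult
      by (metis add_0 mult_zero_right poly_add poly_mult)
    then have "s0 = 0 \<and> s1 = 0"
      using False by (subst (asm) s) (auto simp: map_poly_pCons complex_eq_iff)
    then have "q mod h = 0" using s by simp
    then have "q = h * (q div h)" by (metis mult.commute div_mult_mod_eq add_0_right)
    then show thesis using quadratic False by (simp add: h_def)
  qed
qed

lemma homogeneous_system_nontrivial_solution:
  fixes f :: "'i \<Rightarrow> 'j \<Rightarrow> real"
  assumes "finite J"
  shows "finite I \<Longrightarrow> card J < card I \<Longrightarrow>
    \<exists>c. (\<exists>i\<in>I. c i \<noteq> 0) \<and> (\<forall>j\<in>J. (\<Sum>i\<in>I. c i * f i j) = 0)"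
  using assms
proof (induction J arbitrary: I f rule: finite_induct)
  case empty
  then show ?case by (intro exI[of _ "\<lambda>_. 1"]) (auto simp: card_gt_0_iff)
next
  case (insert x J)
  show ?case
  proof (cases "\<forall>i\<in>I. f i x = 0")
    case True
    then show ?thesis using insert.IH[OF insert.prems(1), of f] insert.prems insert.hyps by auto
  next
    case False
    then obtain i0 where i0: "i0 \<in> I" "f i0 x \<noteq> 0" by auto
    define I' where "I' = I - {i0}"
    have "finite I'" and "card J < card I'"
      using insert.prems i0 insert.hyps by (simp_all add: I'_def)
    \<comment> \<open>Gaussian elimination of the unknown of index \<open>i0\<close> from the equation of index \<open>x\<close>\<close>
    define g where "g = (\<lambda>i j. f i j - (f i x / f i0 x) * f i0 j)"
    obtain c' where c1: "\<exists>i\<in>I'. c' i \<noteq> 0" and c2: "\<forall>j\<in>J. (\<Sum>i\<in>I'. c' i * g i j) = 0"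
      using insert.IH[OF \<open>finite I'\<close> \<open>card J < card I'\<close>, of g] by blast
    define S where "S = (\<lambda>j. \<Sum>i\<in>I'. c' i * f i j)"
    define c where "c = (\<lambda>i. if i = i0 then - S x / f i0 x else c' i)"
    have sumI: "(\<Sum>i\<in>I. c i * f i j) = c i0 * f i0 j + S j" for j
    proof -
      have "(\<Sum>i\<in>I. c i * f i j) = c i0 * f i0 j + (\<Sum>i\<in>I'. c i * f i j)"
        unfolding I'_def using sum.remove[OF insert.prems(1) i0(1)] by simp
      also have "(\<Sum>i\<in>I'. c i * f i j) = S j"
        unfolding S_def c_def I'_def by (intro sum.cong) auto
      finally show ?thesis .
    qed
    have "S j = S x / f i0 x * f i0 j" if "j \<in> J" for j
    proof -
      have "0 = (\<Sum>i\<in>I'. c' i * g i j)" using c2 that by simp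
      also have "\<dots> = S j - S x / f i0 x * f i0 j"
        unfolding g_def S_def
        by (simp add: algebra_simps sum_subtractf sum_distrib_left sum_divide_distrib)
      finally show ?thesis by simp
    qed
    then have "\<forall>j\<in>insert x J. (\<Sum>i\<in>I. c i * f i j) = 0"
      using i0 sumI by (auto simp: c_def)
    moreover have "\<exists>i\<in>I. c i \<noteq> 0" using c1 by (auto simp: c_def I'_def)
    ultimately show ?thesis by blast
  qed
qed

section \<open>Spectral decomposition for a positive definite form\<close>

locale pos_def_form =
  fixes J :: "'a set" and G :: "'a \<Rightarrow> 'a \<Rightarrow> real"
  assumes finite_J: "finite J"
    and G_sym: "\<And>j l. j \<in> J \<Longrightarrow> l \<in> J \<Longrightarrow> G j l = G l j"
    and G_pos: "\<And>x. x \<in> supp_on J \<Longrightarrow> x \<noteq> 0 \<Longrightarrow> 0 < gram_form J G x x"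
begin

abbreviation form :: "('a \<Rightarrow> real) \<Rightarrow> ('a \<Rightarrow> real) \<Rightarrow> real" where
  "form \<equiv> gram_form J G"

lemma form_sym: "form x y = form y x"
proof -
  have "form x y = (\<Sum>j\<in>J. \<Sum>l\<in>J. y l * G l j * x j)"
    unfolding gram_form_def by (intro sum.cong refl) (simp add: G_sym)
  also have "\<dots> = form y x" unfolding gram_form_def by (rule sum.swap)
  finally show ?thesis .
qed

lemma form_nonneg: "x \<in> supp_on J \<Longrightarrow> 0 \<le> form x x"
  by (cases "x = 0") (auto dest: G_pos intro: less_imp_le)

lemma form_nonpos_imp_zero: "x \<in> supp_on J \<Longrightarrow> form x x \<le> 0 \<Longrightarrow> x = 0"
  using G_pos by force

definition self_adjoint :: "(('a \<Rightarrow> real) \<Rightarrow> ('a \<Rightarrow> real)) \<Rightarrow> bool" where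
  "self_adjoint T \<longleftrightarrow> linear_op T \<and> (\<forall>x\<in>supp_on J. T x \<in> supp_on J) \<and>
     (\<forall>x\<in>supp_on J. \<forall>y\<in>supp_on J. form (T x) y = form x (T y))"

lemma self_adjointD:
  assumes "self_adjoint T"
  shows "linear_op T" and "x \<in> supp_on J \<Longrightarrow> T x \<in> supp_on J"
    and "x \<in> supp_on J \<Longrightarrow> y \<in> supp_on J \<Longrightarrow> form (T x) y = form x (T y)"
  using assms by (auto simp: self_adjoint_def)

lemma cyclic_space_supp_on:
  "self_adjoint T \<Longrightarrow> v \<in> supp_on J \<Longrightarrow> x \<in> cyclic_space T v \<Longrightarrow> x \<in> supp_on J"
  by (auto simp: cyclic_space_def intro: poly_op_supp_on self_adjointD)

lemma self_adjoint_generalized_eigvec: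
  assumes T: "self_adjoint T" and y: "y \<in> supp_on J"
    and "T (T y - fscale c y) = fscale c (T y - fscale c y)"
  shows "T y = fscale c y"
proof -
  define u where "u = T y - fscale c y"
  have u: "u \<in> supp_on J" unfolding u_def by (intro supp_on_diff supp_on_fscale self_adjointD[OF T] y)
  have "form u u = form (T y) u - c * form y u"
    unfolding u_def by (simp only: gram_form_diff_left gram_form_fscale_left)
  also have "\<dots> = form y (T u - fscale c u)"
    using self_adjointD(3)[OF T y u] by (simp add: gram_form_diff_right gram_form_fscale_right)
  also have "T u - fscale c u = 0" using assms(3) by (simp add: u_def)
  finally have "u = 0" using form_nonpos_imp_zero[OF u] by simp
  then show ?thesis by (simp add: u_def)
qed

lemma self_adjoint_quadratic_kernel:
  assumes T: "self_adjoint T" and y: "y \<in> supp_on J" and "b\<^sup>2 < 4 * c"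
    and "fscale c y + fscale b (T y) + T (T y) = 0"
  shows "y = 0"
proof -
  have Ty: "T y \<in> supp_on J" by (rule self_adjointD(2)[OF T y])
  have TT: "T (T y) = fscale (-c) y + fscale (-b) (T y)"
  proof
    fix l
    have "c * y l + b * T y l + T (T y) l = 0" using assms(4) by (simp add: fun_eq_iff)
    then show "T (T y) l = (fscale (-c) y + fscale (-b) (T y)) l" by simp
  qed
  define s where "s = T y + fscale (b/2) y"
  have s: "s \<in> supp_on J" unfolding s_def by (intro supp_on_add supp_on_fscale Ty y)
  have "form (T y) (T y) = form y (T (T y))"
    using self_adjointD(3)[OF T y Ty] by (simp add: form_sym)
  also have "\<dots> = - (c * form y y + b * form (T y) y)"
    unfolding TT by (simp add: gram_form_add_right gram_form_fscale_right form_sym[of y "T y"])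
  finally have "form s s = (b\<^sup>2/4 - c) * form y y"
    unfolding s_def
    by (simp add: gram_form_add_left gram_form_add_right gram_form_fscale_left gram_form_fscale_right
        form_sym[of y "T y"] power2_eq_square algebra_simps)
  moreover have "0 \<le> form s s" using form_nonneg s by blast
  moreover have "b\<^sup>2/4 - c < 0" using assms(3) by simp
  ultimately have "form y y \<le> 0" by (auto simp: zero_le_mult_iff)
  then show ?thesis using form_nonpos_imp_zero[OF y] by simp
qed

lemma self_adjoint_eigvecs_orthogonal:
  assumes T: "self_adjoint T" and "x \<in> supp_on J" and "y \<in> supp_on J"
    and "T x = fscale a x" and "T y = fscale b y" and "a \<noteq> b"
  shows "form x y = 0"
proof -
  have "a * form x y = form (T x) y" by (simp add: assms(4) gram_form_fscale_left)
  also have "\<dots> = form x (T y)" using self_adjointD(3)[OF T assms(2,3)] .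
  also have "\<dots> = b * form x y" by (simp add: assms(5) gram_form_fscale_right)
  finally show ?thesis using assms(6) by simp
qed

definition eigen_decomposition ::
    "(('a \<Rightarrow> real) \<Rightarrow> ('a \<Rightarrow> real)) \<Rightarrow> ('a \<Rightarrow> real) \<Rightarrow> real set \<Rightarrow> (real \<Rightarrow> 'a \<Rightarrow> real) \<Rightarrow> bool" where
  "eigen_decomposition T v \<Lambda> y \<longleftrightarrow> finite \<Lambda> \<and> v = (\<Sum>\<mu>\<in>\<Lambda>. y \<mu>) \<and>
     (\<forall>\<mu>\<in>\<Lambda>. T (y \<mu>) = fscale \<mu> (y \<mu>) \<and> y \<mu> \<in> cyclic_space T v)"

lemma eigen_decomposition_linear_factor:
  assumes T: "self_adjoint T" and v: "v \<in> supp_on J"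
    and dec: "eigen_decomposition T (T v - fscale c v) \<Lambda> y"
  shows "\<exists>\<Lambda>' y'. eigen_decomposition T v \<Lambda>' y'"
proof -
  define w where "w = T v - fscale c v"
  have lin: "linear_op T" using self_adjointD(1)[OF T] .
  have fin: "finite \<Lambda>" and w_sum: "w = (\<Sum>\<mu>\<in>\<Lambda>. y \<mu>)"
    and eig: "\<And>\<mu>. \<mu> \<in> \<Lambda> \<Longrightarrow> T (y \<mu>) = fscale \<mu> (y \<mu>)"
    and cyc_w: "\<And>\<mu>. \<mu> \<in> \<Lambda> \<Longrightarrow> y \<mu> \<in> cyclic_space T w"
    using dec by (auto simp: eigen_decomposition_def w_def)
  have "w \<in> cyclic_space T v"
    using cyclic_spaceI[of T "[:-c, 1:]" v] by (simp add: poly_op_linear_factor[OF lin] w_def)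
  then have cyc: "\<And>\<mu>. \<mu> \<in> \<Lambda> \<Longrightarrow> y \<mu> \<in> cyclic_space T v"
    using cyclic_space_trans[OF lin cyc_w] by blast
  \<comment> \<open>the components of \<open>v\<close> for eigenvalues \<open>\<mu> \<noteq> c\<close> are read off from those of \<open>(T - c) v\<close>\<close>
  define v' where "v' = (\<Sum>\<mu>\<in>\<Lambda>-{c}. fscale (1 / (\<mu> - c)) (y \<mu>))"
  define e where "e = v - v'"
  have cyc_v': "v' \<in> cyclic_space T v"
    unfolding v'_def by (intro cyclic_space_sum cyclic_space_fscale cyc) auto
  have cyc_e: "e \<in> cyclic_space T v"
    unfolding e_def by (intro cyclic_space_diff cyclic_space_self cyc_v')
  have Tv': "T v' - fscale c v' = (\<Sum>\<mu>\<in>\<Lambda>-{c}. y \<mu>)"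
    unfolding v'_def by (rule linear_op_resolvent_sum[OF lin]) (simp_all add: eig)
  define y0 where "y0 = (if c \<in> \<Lambda> then y c else 0)"
  have "w - (\<Sum>\<mu>\<in>\<Lambda>-{c}. y \<mu>) = y0"
    using sum.remove[OF fin, of c y] by (cases "c \<in> \<Lambda>") (auto simp: w_sum y0_def)
  then have "T e - fscale c e = y0"
    using Tv' by (simp add: e_def w_def linear_op_diff[OF lin] fun_eq_iff algebra_simps)
  moreover have "T y0 = fscale c y0" using eig by (simp add: y0_def linear_op_zero[OF lin])
  moreover have "e \<in> supp_on J" using cyclic_space_supp_on[OF T v cyc_e] .
  ultimately have eig_e: "T e = fscale c e"
    using self_adjoint_generalized_eigvec[OF T] by simp
  define y' where "y' = (\<lambda>\<mu>. if \<mu> = c then e else fscale (1 / (\<mu> - c)) (y \<mu>))"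
  have "v = y' c + (\<Sum>\<mu>\<in>\<Lambda>-{c}. y' \<mu>)"
    unfolding v'_def y'_def e_def by (simp add: v'_def)
  then have "v = (\<Sum>\<mu>\<in>insert c \<Lambda>. y' \<mu>)" by (simp add: sum.insert_remove[OF fin])
  moreover have "T (y' \<mu>) = fscale \<mu> (y' \<mu>) \<and> y' \<mu> \<in> cyclic_space T v" if "\<mu> \<in> insert c \<Lambda>" for \<mu>
    using that eig_e cyc_e eig cyc
    by (auto simp: y'_def linear_op_fscale[OF lin] fscale_fscale mult.commute intro: cyclic_space_fscale)
  ultimately have "eigen_decomposition T v (insert c \<Lambda>) y'"
    using fin by (simp add: eigen_decomposition_def)
  then show ?thesis by blast
qed

lemma eigen_decomposition_quadratic_factor:
  fixes a b :: real
  defines "h \<equiv> [:a\<^sup>2 + b\<^sup>2, - 2 * a, 1:]"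
  assumes T: "self_adjoint T" and v: "v \<in> supp_on J" and "b \<noteq> 0"
    and dec: "eigen_decomposition T (poly_op T h v) \<Lambda> y"
  shows "eigen_decomposition T v \<Lambda> (\<lambda>\<mu>. fscale (1 / poly h \<mu>) (y \<mu>))"
proof -
  define w where "w = poly_op T h v"
  have lin: "linear_op T" using self_adjointD(1)[OF T] .
  have fin: "finite \<Lambda>" and w_sum: "w = (\<Sum>\<mu>\<in>\<Lambda>. y \<mu>)"
    and eig: "\<And>\<mu>. \<mu> \<in> \<Lambda> \<Longrightarrow> T (y \<mu>) = fscale \<mu> (y \<mu>)"
    and cyc_w: "\<And>\<mu>. \<mu> \<in> \<Lambda> \<Longrightarrow> y \<mu> \<in> cyclic_space T w"
    using dec by (auto simp: eigen_decomposition_def w_def)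
  have cyc: "\<And>\<mu>. \<mu> \<in> \<Lambda> \<Longrightarrow> y \<mu> \<in> cyclic_space T v"
    using cyclic_space_trans[OF lin cyc_w] cyclic_spaceI[of T h v] by (auto simp: w_def)
  have h_pos: "0 < poly h x" for x
  proof -
    have "poly h x = (x - a)\<^sup>2 + b\<^sup>2" by (simp add: h_def power2_eq_square algebra_simps)
    then show ?thesis using \<open>b \<noteq> 0\<close> by (simp add: add_nonneg_pos)
  qed
  \<comment> \<open>\<open>h(T) v' = h(T) v\<close>, and \<open>h(T)\<close> has trivial kernel since \<open>h\<close> has no real root\<close>
  define v' where "v' = (\<Sum>\<mu>\<in>\<Lambda>. fscale (1 / poly h \<mu>) (y \<mu>))"
  have "poly_op T h v' = (\<Sum>\<mu>\<in>\<Lambda>. fscale (1 / poly h \<mu>) (poly_op T h (y \<mu>)))"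
    unfolding v'_def linear_op_sum[OF linear_op_poly_op[OF lin]]
      linear_op_fscale[OF linear_op_poly_op[OF lin]] ..
  also have "\<dots> = w"
    unfolding w_sum
  proof (intro sum.cong refl)
    fix \<mu> assume "\<mu> \<in> \<Lambda>"
    then show "fscale (1 / poly h \<mu>) (poly_op T h (y \<mu>)) = y \<mu>"
      using h_pos[of \<mu>] by (simp add: poly_op_eigvec[OF lin eig] fscale_fscale)
  qed
  finally have "poly_op T h (v - v') = 0"
    by (simp add: linear_op_diff[OF linear_op_poly_op[OF lin]] w_def)
  then have "fscale (a\<^sup>2 + b\<^sup>2) (v - v') + fscale (- 2 * a) (T (v - v')) + T (T (v - v')) = 0"
    by (simp add: h_def poly_op_quadratic[OF lin])
  moreover have "(- 2 * a)\<^sup>2 < 4 * (a\<^sup>2 + b\<^sup>2)"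
  proof -
    have "(- 2 * a)\<^sup>2 = 4 * a\<^sup>2" by (simp add: power2_eq_square)
    moreover have "0 < b\<^sup>2" using \<open>b \<noteq> 0\<close> by simp
    ultimately show ?thesis by simp
  qed
  moreover have "v' \<in> supp_on J"
    using cyclic_space_supp_on[OF T v] cyc unfolding v'_def by (intro supp_on_sum supp_on_fscale) auto
  ultimately have "v - v' = 0"
    using self_adjoint_quadratic_kernel[OF T supp_on_diff[OF v]] by blast
  then show ?thesis
    using fin eig cyc
    by (auto simp: eigen_decomposition_def v'_def linear_op_fscale[OF lin] fscale_fscale mult.commute
        intro: cyclic_space_fscale)
qed

lemma eigen_decomposition_annihilated:
  assumes T: "self_adjoint T"
  shows "q \<noteq> 0 \<Longrightarrow> poly_op T q v = 0 \<Longrightarrow> v \<in> supp_on J \<Longrightarrow>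
    \<exists>\<Lambda> y. eigen_decomposition T v \<Lambda> y"
proof (induction "degree q" arbitrary: q v rule: less_induct)
  case less
  have lin: "linear_op T" using self_adjointD(1)[OF T] .
  show ?case
  proof (cases "degree q = 0")
    case True
    then obtain c where "q = [:c:]" "c \<noteq> 0" using less.prems by (metis degree_eq_zeroE pCons_eq_0_iff)
    then have "v = 0" using less.prems by (simp add: poly_op_const fun_eq_iff)
    then have "eigen_decomposition T v {} y" for y by (simp add: eigen_decomposition_def)
    then show ?thesis by blast
  next
    case False
    then have "degree q > 0" by simp
    then show ?thesis
    proof (cases rule: real_poly_linear_or_quadratic_factor)
      case (linear c r)
      have "r \<noteq> 0" using less.prems linear by auto
      then have "degree q = degree [:- c, 1:] + degree r"
        unfolding linear by (intro degree_mult_eq) auto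
      then have "degree r < degree q" by simp
      moreover have "poly_op T r (poly_op T [:- c, 1:] v) = 0"
        using less.prems linear by (simp add: poly_op_mult[OF lin, symmetric] mult.commute)
      ultimately obtain \<Lambda> y where "eigen_decomposition T (T v - fscale c v) \<Lambda> y"
        using less.hyps \<open>r \<noteq> 0\<close> self_adjointD(2)[OF T] less.prems(3)
        by (metis poly_op_linear_factor[OF lin] supp_on_diff supp_on_fscale)
      then show ?thesis by (rule eigen_decomposition_linear_factor[OF T less.prems(3)])
    next
      case (quadratic a b r)
      define h where "h = [:a\<^sup>2 + b\<^sup>2, - 2 * a, 1:]"
      have "r \<noteq> 0" using less.prems quadratic by auto
      then have "degree q = degree h + degree r"
        unfolding quadratic h_def by (intro degree_mult_eq) auto
      then have "degree r < degree q" by (simp add: h_def)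
      moreover have "poly_op T r (poly_op T h v) = 0"
        using less.prems quadratic by (simp add: h_def poly_op_mult[OF lin, symmetric] mult.commute)
      moreover have "poly_op T h v \<in> supp_on J"
        using poly_op_supp_on self_adjointD(2)[OF T] less.prems(3) by blast
      ultimately obtain \<Lambda> y where "eigen_decomposition T (poly_op T h v) \<Lambda> y"
        using less.hyps \<open>r \<noteq> 0\<close> by blast
      then show ?thesis
        using eigen_decomposition_quadratic_factor[OF T less.prems(3) \<open>b \<noteq> 0\<close>] h_def by blast
    qed
  qed
qed

lemma annihilating_poly_exists:
  assumes T: "self_adjoint T" and v: "v \<in> supp_on J"
  shows "\<exists>q. q \<noteq> 0 \<and> poly_op T q v = 0"
proof -
  have iter: "(T ^^ i) v \<in> supp_on J" for i
    by (induction i) (auto simp: v self_adjointD(2)[OF T])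
  define n where "n = card J"
  obtain c where c1: "\<exists>i\<in>{..n}. c i \<noteq> 0" and c2: "\<forall>j\<in>J. (\<Sum>i\<in>{..n}. c i * (T ^^ i) v j) = 0"
    using homogeneous_system_nontrivial_solution[OF finite_J, of "{..n}" "\<lambda>i. (T ^^ i) v"]
    by (auto simp: n_def)
  define q where "q = (\<Sum>i\<le>n. monom (c i) i)"
  have coeff_q: "coeff q i = (if i \<le> n then c i else 0)" for i
    unfolding q_def by (simp add: coeff_sum coeff_monom)
  have "degree q \<le> n" by (rule degree_le) (auto simp: coeff_q)
  then have "poly_op T q v = (\<lambda>l. \<Sum>i\<le>n. c i * (T ^^ i) v l)"
    by (simp add: poly_op_degree_le coeff_q)
  also have "\<dots> = 0"
    using c2 iter by (auto simp: fun_eq_iff supp_on_def sum_fun_apply)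
  finally show ?thesis using c1 coeff_q by (metis atMost_iff coeff_0)
qed

lemma eigen_decomposition_exists:
  "self_adjoint T \<Longrightarrow> v \<in> supp_on J \<Longrightarrow> \<exists>\<Lambda> y. eigen_decomposition T v \<Lambda> y"
  using annihilating_poly_exists eigen_decomposition_annihilated by blast

definition joint_eigen_decomposition ::
    "('i \<Rightarrow> ('a \<Rightarrow> real) \<Rightarrow> ('a \<Rightarrow> real)) \<Rightarrow> 'i set \<Rightarrow> ('a \<Rightarrow> real) \<Rightarrow> ('i \<Rightarrow> real) set
      \<Rightarrow> (('i \<Rightarrow> real) \<Rightarrow> 'a \<Rightarrow> real) \<Rightarrow> bool" where
  "joint_eigen_decomposition X S v K w \<longleftrightarrow> finite K \<and> v = (\<Sum>u\<in>K. w u) \<and>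
     (\<forall>u\<in>K. w u \<in> supp_on J \<and> (\<forall>i\<in>S. X i (w u) = fscale (u i) (w u)))"

lemma joint_eigen_decomposition_group:
  assumes lin: "\<And>i. i \<in> S \<Longrightarrow> linear_op (X i)" and fin: "finite P"
    and eig: "\<And>p. p \<in> P \<Longrightarrow> y p \<in> supp_on J \<and> (\<forall>i\<in>S. X i (y p) = fscale (lab p i) (y p))"
  shows "joint_eigen_decomposition X S (\<Sum>p\<in>P. y p) (lab ` P) (\<lambda>u. \<Sum>p\<in>{p\<in>P. lab p = u}. y p)"
  unfolding joint_eigen_decomposition_def
proof (intro conjI ballI)
  show "finite (lab ` P)" using fin by simp
  show "(\<Sum>p\<in>P. y p) = (\<Sum>u\<in>lab ` P. \<Sum>p\<in>{p\<in>P. lab p = u}. y p)"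
    by (rule sum.image_gen[OF fin])
  fix u assume "u \<in> lab ` P"
  show "(\<Sum>p\<in>{p\<in>P. lab p = u}. y p) \<in> supp_on J" using eig by (intro supp_on_sum) auto
  fix i assume "i \<in> S"
  then show "X i (\<Sum>p\<in>{p\<in>P. lab p = u}. y p) = fscale (u i) (\<Sum>p\<in>{p\<in>P. lab p = u}. y p)"
    using eig by (simp add: linear_op_sum[OF lin] fscale_sum)
qed

lemma joint_eigen_decomposition_insert:
  assumes sa: "\<And>i. i \<in> insert p F \<Longrightarrow> self_adjoint (X i)"
    and comm: "\<And>i x. i \<in> F \<Longrightarrow> X i (X p x) = X p (X i x)" and "p \<notin> F"
    and dec_F: "joint_eigen_decomposition X F x K w"
  shows "\<exists>K' w'. joint_eigen_decomposition X (insert p F) x K' w'"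
proof -
  have lin: "\<And>i. i \<in> insert p F \<Longrightarrow> linear_op (X i)" using sa self_adjointD(1) by blast
  have fin: "finite K" and x_sum: "x = (\<Sum>u\<in>K. w u)"
    and w: "\<And>u. u \<in> K \<Longrightarrow> w u \<in> supp_on J"
    and eig: "\<And>u i. u \<in> K \<Longrightarrow> i \<in> F \<Longrightarrow> X i (w u) = fscale (u i) (w u)"
    using dec_F by (auto simp: joint_eigen_decomposition_def)
  \<comment> \<open>split every joint eigenvector of \<open>F\<close> further along the eigenspaces of \<open>X p\<close>\<close>
  have "\<forall>u\<in>K. \<exists>\<Lambda>y. eigen_decomposition (X p) (w u) (fst \<Lambda>y) (snd \<Lambda>y)"
    using eigen_decomposition_exists[OF sa w] by auto
  then obtain f where f: "\<forall>u\<in>K. eigen_decomposition (X p) (w u) (fst (f u)) (snd (f u))"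
    by (rule bchoice[elim_format]) blast
  define \<Lambda> y where "\<Lambda> u = fst (f u)" and "y u = snd (f u)" for u
  have dec: "\<And>u. u \<in> K \<Longrightarrow> eigen_decomposition (X p) (w u) (\<Lambda> u) (y u)"
    using f by (simp add: \<Lambda>_def y_def)
  have fin_\<Lambda>: "\<And>u. u \<in> K \<Longrightarrow> finite (\<Lambda> u)"
    and w_sum: "\<And>u. u \<in> K \<Longrightarrow> w u = (\<Sum>\<mu>\<in>\<Lambda> u. y u \<mu>)"
    using dec unfolding eigen_decomposition_def by blast+
  define P where "P = Sigma K \<Lambda>"
  have "finite P" unfolding P_def using fin fin_\<Lambda> by blast
  have "x = (\<Sum>u\<in>K. \<Sum>\<mu>\<in>\<Lambda> u. y u \<mu>)" unfolding x_sum using w_sum by (rule sum.cong[OF refl])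
  also have "\<dots> = (\<Sum>(u, \<mu>)\<in>P. y u \<mu>)" unfolding P_def by (rule sum.Sigma[OF fin]) (simp add: fin_\<Lambda>)
  finally have x_P: "x = (\<Sum>(u, \<mu>)\<in>P. y u \<mu>)" .
  have comp: "y u \<mu> \<in> supp_on J \<and> (\<forall>i\<in>insert p F. X i (y u \<mu>) = fscale ((u(p := \<mu>)) i) (y u \<mu>))"
    if "(u, \<mu>) \<in> P" for u \<mu>
  proof -
    have u: "u \<in> K" and \<mu>: "\<mu> \<in> \<Lambda> u" using that by (auto simp: P_def)
    have cyc: "y u \<mu> \<in> cyclic_space (X p) (w u)" and eig_p: "X p (y u \<mu>) = fscale \<mu> (y u \<mu>)"
      using dec[OF u] \<mu> unfolding eigen_decomposition_def by blast+
    have eig_F: "X i (y u \<mu>) = fscale (u i) (y u \<mu>)" if "i \<in> F" for i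
      using that by (intro cyclic_space_eigvec[OF lin lin comm eig[OF u that] cyc]) simp_all
    have "X i (y u \<mu>) = fscale ((u(p := \<mu>)) i) (y u \<mu>)" if "i \<in> insert p F" for i
      using that eig_F eig_p \<open>p \<notin> F\<close> by (cases "i = p") simp_all
    then show ?thesis using cyclic_space_supp_on[OF sa w[OF u] cyc] by blast
  qed
  have comp_P: "(\<lambda>(u, \<mu>). y u \<mu>) pr \<in> supp_on J \<and>
      (\<forall>i\<in>insert p F. X i ((\<lambda>(u, \<mu>). y u \<mu>) pr) =
        fscale ((\<lambda>(u, \<mu>). u(p := \<mu>)) pr i) ((\<lambda>(u, \<mu>). y u \<mu>) pr))" if "pr \<in> P" for pr
    using comp[of "fst pr" "snd pr"] that by (simp add: case_prod_beta)
  have "joint_eigen_decomposition X (insert p F) x ((\<lambda>(u, \<mu>). u(p := \<mu>)) ` P)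
      (\<lambda>u'. \<Sum>pr\<in>{pr\<in>P. (\<lambda>(u, \<mu>). u(p := \<mu>)) pr = u'}. (\<lambda>(u, \<mu>). y u \<mu>) pr)"
    unfolding x_P by (rule joint_eigen_decomposition_group[OF lin \<open>finite P\<close> comp_P])
  then show ?thesis by blast
qed

lemma joint_eigen_decomposition_exists:
  assumes S: "finite S"
    and sa: "\<And>i. i \<in> S \<Longrightarrow> self_adjoint (X i)"
    and comm: "\<And>i k x. i \<in> S \<Longrightarrow> k \<in> S \<Longrightarrow> X i (X k x) = X k (X i x)"
    and v: "v \<in> supp_on J"
  shows "\<exists>K w. joint_eigen_decomposition X S v K w"
proof -
  have "\<forall>x\<in>supp_on J. \<exists>K w. joint_eigen_decomposition X F x K w" if "F \<subseteq> S" for F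
    using finite_subset[OF that S] that
  proof (induction F rule: finite_induct)
    case empty
    have "joint_eigen_decomposition X {} x {\<lambda>_. 0} (\<lambda>_. x)" if "x \<in> supp_on J" for x
      using that by (simp add: joint_eigen_decomposition_def)
    then show ?case by blast
  next
    case (insert p F)
    show ?case
    proof
      fix x assume "x \<in> supp_on J"
      then obtain K w where "joint_eigen_decomposition X F x K w" using insert by blast
      then show "\<exists>K w. joint_eigen_decomposition X (insert p F) x K w"
        using insert sa comm by (intro joint_eigen_decomposition_insert) auto
    qed
  qed
  then show ?thesis using v by blast
qed

end

definition exp_var :: "'r \<Rightarrow> 'r \<Rightarrow> nat" where
  "exp_var i = (\<lambda>j. if j = i then 1 else 0)"

lemma finite_mons: "finite (mons t :: ('r::finite \<Rightarrow> nat) set)"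
proof -
  have "mons t \<subseteq> PiE UNIV (\<lambda>_::'r. {..t})"
  proof
    fix \<alpha> :: "'r \<Rightarrow> nat" assume "\<alpha> \<in> mons t"
    then have "\<alpha> i \<le> t" for i
      using member_le_sum[of i UNIV \<alpha>] by (auto simp: mons_def mdeg_def)
    then show "\<alpha> \<in> PiE UNIV (\<lambda>_. {..t})" by (auto simp: PiE_def Pi_def extensional_def)
  qed
  moreover have "finite (PiE UNIV (\<lambda>_::'r. {..t}))" by (rule finite_PiE) auto
  ultimately show ?thesis by (rule finite_subset)
qed

lemma mdeg_add: "mdeg ((\<beta>::'r::finite \<Rightarrow> nat) + \<gamma>) = mdeg \<beta> + mdeg \<gamma>"
  by (simp add: mdeg_def sum.distrib)

lemma mdeg_zero [simp]: "mdeg (0::'r::finite \<Rightarrow> nat) = 0"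
  by (simp add: mdeg_def)

lemma mdeg_exp_var [simp]: "mdeg (exp_var i :: 'r::finite \<Rightarrow> nat) = 1"
  by (simp add: mdeg_def exp_var_def)

lemma mdeg_eq_0_iff: "mdeg (\<alpha>::'r::finite \<Rightarrow> nat) = 0 \<longleftrightarrow> \<alpha> = 0"
  by (auto simp: mdeg_def fun_eq_iff)

lemma mons_mono: "s \<le> t \<Longrightarrow> mons s \<subseteq> mons t"
  by (auto simp: mons_def)

lemma mons_add_exp_var: "\<beta> \<in> mons (t - 1) \<Longrightarrow> 1 \<le> t \<Longrightarrow> \<beta> + exp_var i \<in> mons t"
  by (auto simp: mons_def mdeg_add)

lemma mdeg_Suc_obtain_exp_var:
  assumes "mdeg (\<alpha>::'r::finite \<Rightarrow> nat) = Suc n"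
  obtains \<alpha>' i where "\<alpha> = \<alpha>' + exp_var i" and "mdeg \<alpha>' = n"
proof -
  have "mdeg \<alpha> \<noteq> 0" using assms by simp
  then obtain i where "\<alpha> i > 0" by (auto simp: mdeg_eq_0_iff fun_eq_iff)
  define \<alpha>' where "\<alpha>' = \<alpha> - exp_var i"
  have \<alpha>: "\<alpha> = \<alpha>' + exp_var i" using \<open>\<alpha> i > 0\<close> by (auto simp: \<alpha>'_def exp_var_def fun_eq_iff)
  have "mdeg \<alpha> = mdeg \<alpha>' + 1" unfolding \<alpha> by (simp only: mdeg_add mdeg_exp_var)
  then have "mdeg \<alpha>' = n" using assms by simp
  with \<alpha> show thesis by (rule that)
qed

lemma mdeg_split:
  "mdeg (\<alpha>::'r::finite \<Rightarrow> nat) = p + q \<Longrightarrow> \<exists>\<beta> \<gamma>. \<alpha> = \<beta> + \<gamma> \<and> mdeg \<beta> = p \<and> mdeg \<gamma> = q"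
proof (induction p arbitrary: \<alpha>)
  case 0
  show ?case by (rule exI[of _ "0::'r \<Rightarrow> nat"], rule exI[of _ \<alpha>]) (use 0 in \<open>simp add: mdeg_def\<close>)
next
  case (Suc p)
  then have "mdeg \<alpha> = Suc (p + q)" by simp
  then obtain \<alpha>' i where \<alpha>: "\<alpha> = \<alpha>' + exp_var i" and "mdeg \<alpha>' = p + q"
    by (rule mdeg_Suc_obtain_exp_var)
  then obtain \<beta> \<gamma> where \<beta>\<gamma>: "\<alpha>' = \<beta> + \<gamma>" "mdeg \<beta> = p" "mdeg \<gamma> = q" using Suc.IH by blast
  show ?case
  proof (intro exI conjI)
    show "\<alpha> = \<beta> + exp_var i + \<gamma>" using \<alpha> \<beta>\<gamma>(1) by (simp add: ac_simps)
    show "mdeg (\<beta> + exp_var i) = Suc p" using \<beta>\<gamma>(2) by (simp only: mdeg_add mdeg_exp_var)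
  qed (rule \<beta>\<gamma>(3))
qed

lemma mdeg_le_double_split:
  assumes "mdeg (\<alpha>::'r::finite \<Rightarrow> nat) \<le> 2 * t"
  obtains \<beta> \<gamma> where "\<alpha> = \<beta> + \<gamma>" and "\<beta> \<in> mons t" and "\<gamma> \<in> mons t"
proof -
  obtain \<beta> \<gamma> where "\<alpha> = \<beta> + \<gamma>" "mdeg \<beta> = min (mdeg \<alpha>) t" "mdeg \<gamma> = mdeg \<alpha> - min (mdeg \<alpha>) t"
    using mdeg_split[of \<alpha> "min (mdeg \<alpha>) t" "mdeg \<alpha> - min (mdeg \<alpha>) t"] by auto
  then show thesis using assms that by (simp add: mons_def)
qed

lemma monom_eval_add: "monom_eval (\<beta> + \<gamma>) \<xi> = monom_eval \<beta> \<xi> * monom_eval \<gamma> \<xi>"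
  by (simp add: monom_eval_def power_add prod.distrib)

lemma monom_eval_zero [simp]: "monom_eval 0 \<xi> = 1"
  by (simp add: monom_eval_def)

lemma monom_eval_exp_var: "monom_eval (exp_var i) \<xi> = \<xi> $ i"
proof -
  have "monom_eval (exp_var i) \<xi> = (\<Prod>j\<in>UNIV. if j = i then \<xi> $ i else 1)"
    unfolding monom_eval_def exp_var_def by (intro prod.cong) auto
  then show ?thesis by simp
qed

lemma deg_le_mono: "deg_le m p \<Longrightarrow> m \<le> n \<Longrightarrow> deg_le n p"
  and deg_le_diff: "deg_le m p \<Longrightarrow> deg_le m q \<Longrightarrow> deg_le m (\<lambda>\<alpha>. p \<alpha> - q \<alpha>)"
  and deg_le_scale: "deg_le m p \<Longrightarrow> deg_le m (\<lambda>\<alpha>. c * p \<alpha>)"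
  and deg_le_sum: "(\<And>i. i \<in> I \<Longrightarrow> deg_le m (f i)) \<Longrightarrow> deg_le m (\<lambda>\<alpha>. \<Sum>i\<in>I. f i \<alpha>)"
  by (auto simp: deg_le_def)

lemma deg_le_sum_list: "(\<And>q. q \<in> set qs \<Longrightarrow> deg_le m (f q)) \<Longrightarrow> deg_le m (\<lambda>\<alpha>. \<Sum>q\<leftarrow>qs. f q \<alpha>)"
  by (induction qs) (auto simp: deg_le_def)

lemma peval_add: "peval N (\<lambda>\<alpha>. p \<alpha> + q \<alpha>) \<xi> = peval N p \<xi> + peval N q \<xi>"
  and peval_diff: "peval N (\<lambda>\<alpha>. p \<alpha> - q \<alpha>) \<xi> = peval N p \<xi> - peval N q \<xi>"
  and peval_scale: "peval N (\<lambda>\<alpha>. c * p \<alpha>) \<xi> = c * peval N p \<xi>"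
  by (simp_all add: peval_def sum.distrib sum_subtractf sum_distrib_left algebra_simps)

lemma peval_sum: "peval N (\<lambda>\<alpha>. \<Sum>i\<in>I. f i \<alpha>) \<xi> = (\<Sum>i\<in>I. peval N (f i) \<xi>)"
  unfolding peval_def sum_distrib_right by (rule sum.swap)

lemma peval_sum_list: "peval N (\<lambda>\<alpha>. \<Sum>q\<leftarrow>qs. f q \<alpha>) \<xi> = (\<Sum>q\<leftarrow>qs. peval N (f q) \<xi>)"
proof (induction qs)
  case (Cons a qs)
  then show ?case using peval_add[of N "f a" "\<lambda>\<alpha>. \<Sum>q\<leftarrow>qs. f q \<alpha>" \<xi>] by simp
qed (simp add: peval_def)

lemma peval_deg_le: "deg_le m p \<Longrightarrow> m \<le> N \<Longrightarrow> peval N p \<xi> = peval m p \<xi>"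
  unfolding peval_def
  by (rule sum.mono_neutral_right) (auto simp: finite_mons[unfolded mons_def] mons_def deg_le_def)

lemma pmul_as_double_sum:
  assumes p: "deg_le m p" and q: "deg_le n q"
  shows "pmul p q \<alpha> = (\<Sum>\<beta>\<in>mons m. \<Sum>\<gamma>\<in>mons n. if \<beta> + \<gamma> = \<alpha> then p \<beta> * q \<gamma> else 0)"
proof -
  let ?B = "{\<beta>. \<forall>i. \<beta> i \<le> \<alpha> i}"
  have "?B \<subseteq> PiE UNIV (\<lambda>i. {..\<alpha> i})" by (auto simp: PiE_def Pi_def extensional_def)
  then have fin: "finite ?B" by (rule finite_subset) (simp add: finite_PiE)
  have inner: "(\<Sum>\<gamma>\<in>mons n. if \<beta> + \<gamma> = \<alpha> then p \<beta> * q \<gamma> else 0)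
      = (if \<beta> \<in> ?B then p \<beta> * q (\<lambda>i. \<alpha> i - \<beta> i) else 0)" for \<beta>
  proof (cases "\<beta> \<in> ?B")
    case True
    then have "\<beta> + \<gamma> = \<alpha> \<longleftrightarrow> \<gamma> = (\<lambda>i. \<alpha> i - \<beta> i)" for \<gamma>
      by (auto simp: fun_eq_iff) (metis add_diff_cancel_left')
    moreover have "q (\<lambda>i. \<alpha> i - \<beta> i) = 0" if "(\<lambda>i. \<alpha> i - \<beta> i) \<notin> mons n"
      using q that by (auto simp: deg_le_def mons_def)
    ultimately show ?thesis using True by (simp add: finite_mons cong: if_cong)
  next
    case False
    then have "\<beta> + \<gamma> \<noteq> \<alpha>" for \<gamma> by (auto simp: fun_eq_iff) (metis le_add1)
    then show ?thesis using False by (simp del: mem_Collect_eq)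
  qed
  have "(\<Sum>\<beta>\<in>mons m. \<Sum>\<gamma>\<in>mons n. if \<beta> + \<gamma> = \<alpha> then p \<beta> * q \<gamma> else 0)
      = (\<Sum>\<beta>\<in>mons m \<inter> ?B. p \<beta> * q (\<lambda>i. \<alpha> i - \<beta> i))"
    by (simp only: inner) (simp add: sum.inter_restrict finite_mons)
  also have "\<dots> = (\<Sum>\<beta>\<in>?B. p \<beta> * q (\<lambda>i. \<alpha> i - \<beta> i))"
    using p fin by (intro sum.mono_neutral_left) (auto simp: mons_def deg_le_def, metis not_le)
  finally show ?thesis by (simp add: pmul_def)
qed

lemma deg_le_pmul:
  assumes p: "deg_le m p" and q: "deg_le n q"
  shows "deg_le (m + n) (pmul p q)"
  unfolding deg_le_def
proof (intro allI impI)
  fix \<alpha> :: "'a \<Rightarrow> nat" assume "m + n < mdeg \<alpha>"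
  then have "\<And>\<beta> \<gamma>. \<beta> \<in> mons m \<Longrightarrow> \<gamma> \<in> mons n \<Longrightarrow> \<beta> + \<gamma> \<noteq> \<alpha>"
    by (auto simp: mons_def mdeg_add)
  then show "pmul p q \<alpha> = 0" by (simp add: pmul_as_double_sum[OF p q])
qed

lemma peval_pmul:
  assumes p: "deg_le m p" and q: "deg_le n q"
  shows "peval (m + n) (pmul p q) \<xi> = peval m p \<xi> * peval n q \<xi>"
proof -
  have "peval (m + n) (pmul p q) \<xi> = (\<Sum>\<alpha>\<in>mons (m + n). \<Sum>\<beta>\<in>mons m. \<Sum>\<gamma>\<in>mons n.
      if \<beta> + \<gamma> = \<alpha> then p \<beta> * q \<gamma> * monom_eval \<alpha> \<xi> else 0)"
    unfolding peval_def pmul_as_double_sum[OF p q] sum_distrib_right by (intro sum.cong refl) auto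
  also have "\<dots> = (\<Sum>\<beta>\<in>mons m. \<Sum>\<gamma>\<in>mons n. \<Sum>\<alpha>\<in>mons (m + n).
      if \<alpha> = \<beta> + \<gamma> then p \<beta> * q \<gamma> * monom_eval \<alpha> \<xi> else 0)"
    by (subst sum.swap, subst (2) sum.swap) (simp add: eq_commute)
  also have "\<dots> = (\<Sum>\<beta>\<in>mons m. \<Sum>\<gamma>\<in>mons n. p \<beta> * q \<gamma> * monom_eval (\<beta> + \<gamma>) \<xi>)"
    by (intro sum.cong refl) (auto simp: finite_mons[unfolded mons_def] mons_def mdeg_add)
  also have "\<dots> = peval m p \<xi> * peval n q \<xi>"
    by (simp add: peval_def sum_product monom_eval_add algebra_simps)
  finally show ?thesis .
qed

lemma deg_le_sos:
  assumes "sos t s"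
  shows "deg_le (2 * t) s"
proof -
  obtain qs where qs: "\<forall>q\<in>set qs. deg_le t q" and s: "s = (\<lambda>\<alpha>. \<Sum>q\<leftarrow>qs. pmul q q \<alpha>)"
    using assms by (auto simp: sos_def)
  show ?thesis unfolding s
    by (rule deg_le_sum_list) (use qs deg_le_pmul[of t _ t] in \<open>auto simp: mult_2\<close>)
qed

lemma peval_sos_nonneg:
  assumes "sos t s"
  shows "0 \<le> peval (2 * t) s \<xi>"
proof -
  obtain qs where qs: "\<forall>q\<in>set qs. deg_le t q" and s: "s = (\<lambda>\<alpha>. \<Sum>q\<leftarrow>qs. pmul q q \<alpha>)"
    using assms by (auto simp: sos_def)
  have "peval (2 * t) s \<xi> = (\<Sum>q\<leftarrow>qs. (peval t q \<xi>)\<^sup>2)"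
    unfolding s peval_sum_list
    by (rule arg_cong[where f=sum_list], rule map_cong[OF refl])
       (use qs peval_pmul[of t _ t] in \<open>auto simp: mult_2 power2_eq_square\<close>)
  also have "\<dots> \<ge> 0" by (rule sum_list_nonneg) auto
  finally show ?thesis .
qed

lemma deg_le_pconst: "deg_le 0 (pconst a)"
  by (auto simp: deg_le_def pconst_def mdeg_def)

lemma peval_pconst: "peval N (pconst a) \<xi> = a"
proof -
  have "peval N (pconst a) \<xi> = (\<Sum>\<alpha>\<in>mons N. if \<alpha> = (\<lambda>_. 0) then a * monom_eval \<alpha> \<xi> else 0)"
    unfolding peval_def pconst_def by (intro sum.cong) auto
  then show ?thesis
    by (simp add: finite_mons[unfolded mons_def mdeg_def] mons_def mdeg_def monom_eval_def)
qed

lemma deg_le_pvar: "deg_le 1 (pvar i)"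
  by (auto simp: deg_le_def pvar_def mdeg_def)

lemma peval_pvar: "1 \<le> N \<Longrightarrow> peval N (pvar i) \<xi> = \<xi> $ i"
proof -
  assume "1 \<le> N"
  have "peval N (pvar i) \<xi> = (\<Sum>\<alpha>\<in>mons N. if \<alpha> = exp_var i then monom_eval \<alpha> \<xi> else 0)"
    unfolding peval_def pvar_def exp_var_def[symmetric] by (intro sum.cong) auto
  then show ?thesis
    using \<open>1 \<le> N\<close> by (simp add: finite_mons[unfolded mons_def] mons_def monom_eval_exp_var)
qed

lemma gpoly_eq:
  "gpoly Gam mu Lam = (\<lambda>\<alpha>. pconst Gam \<alpha> - (\<Sum>i\<in>UNIV. \<Sum>j\<in>UNIV. matrix_inv Lam $ i $ j *
     pmul (\<lambda>\<beta>. pvar i \<beta> - pconst (mu $ i) \<beta>) (\<lambda>\<beta>. pvar j \<beta> - pconst (mu $ j) \<beta>) \<alpha>))"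
  by (simp add: gpoly_def fun_eq_iff)

lemma deg_le_gpoly: "deg_le 2 (gpoly Gam mu Lam)"
proof -
  have "deg_le 1 (\<lambda>\<beta>. pvar i \<beta> - pconst (mu $ i) \<beta>)" for i
    by (rule deg_le_diff[OF deg_le_pvar deg_le_mono[OF deg_le_pconst]]) simp
  from deg_le_pmul[OF this this] show ?thesis
    unfolding gpoly_eq
    by (intro deg_le_diff deg_le_sum deg_le_scale deg_le_mono[OF deg_le_pconst]) (simp_all add: numeral_2_eq_2)
qed

lemma peval_gpoly: "peval 2 (gpoly Gam mu Lam) \<xi> = gfun Gam mu Lam \<xi>"
proof -
  define l where "l i = (\<lambda>\<beta>. pvar i \<beta> - pconst (mu $ i) \<beta>)" for i
  have "deg_le 1 (l i)" for i
    unfolding l_def by (rule deg_le_diff[OF deg_le_pvar deg_le_mono[OF deg_le_pconst]]) simp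
  moreover have "peval 1 (l i) \<xi> = \<xi> $ i - mu $ i" for i
    by (simp add: l_def peval_diff peval_pvar peval_pconst)
  ultimately have "peval 2 (pmul (l i) (l j)) \<xi> = (\<xi> $ i - mu $ i) * (\<xi> $ j - mu $ j)" for i j
    using peval_pmul[of 1 "l i" 1 "l j", where \<xi>=\<xi>] by (simp add: numeral_2_eq_2)
  then have "peval 2 (gpoly Gam mu Lam) \<xi> =
      Gam - (\<Sum>i\<in>UNIV. \<Sum>j\<in>UNIV. matrix_inv Lam $ i $ j * ((\<xi> $ i - mu $ i) * (\<xi> $ j - mu $ j)))"
    unfolding gpoly_eq l_def[symmetric] peval_diff peval_sum peval_scale peval_pconst by simp
  also have "\<dots> = gfun Gam mu Lam \<xi>"
    unfolding gfun_def by (simp add: inner_vec_def matrix_vector_mult_def sum_distrib_left algebra_simps)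
  finally show ?thesis .
qed

lemma QM_nonneg_on_Uset:
  assumes "1 \<le> k" and "QM Gam mu Lam k p" and "\<xi> \<in> Uset Gam mu Lam"
  shows "0 \<le> peval (2 * k) p \<xi>"
proof -
  obtain s0 s1 where s0: "sos k s0" and s1: "sos (k - 1) s1"
    and p: "p = (\<lambda>\<alpha>. s0 \<alpha> + pmul (gpoly Gam mu Lam) s1 \<alpha>)"
    using assms(2) by (auto simp: QM_def)
  have k: "2 + 2 * (k - 1) = 2 * k" using assms(1) by simp
  have "peval (2 * k) (pmul (gpoly Gam mu Lam) s1) \<xi> = gfun Gam mu Lam \<xi> * peval (2 * (k - 1)) s1 \<xi>"
    using peval_pmul[OF deg_le_gpoly deg_le_sos[OF s1], where \<xi>=\<xi>] by (simp only: k peval_gpoly)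
  moreover have "0 \<le> gfun Gam mu Lam \<xi>" using assms(3) by (simp add: Uset_def)
  ultimately show ?thesis
    unfolding p peval_add using peval_sos_nonneg[OF s0] peval_sos_nonneg[OF s1] by simp
qed

lemma nonneg_quadratic_linear_coeff_zero:
  fixes a b :: real
  assumes h: "\<And>s. 0 \<le> 2 * s * b + s\<^sup>2 * a"
  shows "b = 0"
proof -
  have a: "0 \<le> a" using h[of 1] h[of "-1"] by simp
  define d where "d = a + 1"
  have d: "d > 0" using a by (simp add: d_def)
  define s where "s = - b / d"
  have sd: "s * d = - b" using d by (simp add: s_def)
  have "0 \<le> (2 * s * b + s\<^sup>2 * a) * d\<^sup>2" using h[of s] d by simp
  also have "(2 * s * b + s\<^sup>2 * a) * d\<^sup>2 = 2 * (s * d) * b * d + (s * d)\<^sup>2 * a"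
    by (simp add: algebra_simps power2_eq_square)
  also have "\<dots> = - (b\<^sup>2 * (a + 2))" unfolding sd by (simp add: d_def algebra_simps power2_eq_square)
  finally have "b\<^sup>2 * (a + 2) \<le> 0" by simp
  then show ?thesis using a by (simp add: mult_le_0_iff)
qed

lemma sum_delta_mult: "finite I \<Longrightarrow> i0 \<in> I \<Longrightarrow> (\<Sum>i\<in>I. (if i = i0 then 1 else 0) * f i) = (f i0 :: real)"
  by (simp add: if_distrib[of "\<lambda>c. c * _"] cong: if_cong)

lemma psd_on_kernel:
  assumes psd: "psd_on I M" and fI: "finite I" and i0: "i0 \<in> I"
    and q0: "(\<Sum>i\<in>I. \<Sum>j\<in>I. v i * M i j * v j) = 0"
  shows "(\<Sum>j\<in>I. M i0 j * v j) = 0"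
proof (rule nonneg_quadratic_linear_coeff_zero)
  fix s
  have sym: "\<And>i j. i \<in> I \<Longrightarrow> j \<in> I \<Longrightarrow> M i j = M j i" using psd by (auto simp: psd_on_def)
  \<comment> \<open>the quadratic form along the line through \<open>v\<close> in the direction of the unit vector at \<open>i0\<close>\<close>
  define e where "e = (\<lambda>i. if i = i0 then 1 else (0::real))"
  define b where "b = (\<Sum>j\<in>I. M i0 j * v j)"
  have "(\<Sum>i\<in>I. \<Sum>j\<in>I. (v i + s * e i) * M i j * (v j + s * e j))
      = (\<Sum>i\<in>I. \<Sum>j\<in>I. v i * M i j * v j) + s * (\<Sum>i\<in>I. e i * (\<Sum>j\<in>I. M i j * v j))
        + s * (\<Sum>i\<in>I. v i * (\<Sum>j\<in>I. e j * M i j)) + s\<^sup>2 * (\<Sum>i\<in>I. e i * (\<Sum>j\<in>I. e j * M i j))"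
    by (simp add: algebra_simps sum.distrib sum_distrib_left power2_eq_square)
  also have "(\<Sum>i\<in>I. e i * (\<Sum>j\<in>I. M i j * v j)) = b"
    unfolding e_def b_def by (rule sum_delta_mult[OF fI i0])
  also have "(\<Sum>i\<in>I. v i * (\<Sum>j\<in>I. e j * M i j)) = b"
    unfolding e_def b_def sum_delta_mult[OF fI i0] using i0 sym by (intro sum.cong refl) (simp add: mult.commute)
  also have "(\<Sum>i\<in>I. e i * (\<Sum>j\<in>I. e j * M i j)) = M i0 i0"
    unfolding e_def sum_delta_mult[OF fI i0] ..
  finally have "(\<Sum>i\<in>I. \<Sum>j\<in>I. (v i + s * e i) * M i j * (v j + s * e j)) = 2 * s * b + s\<^sup>2 * M i0 i0"
    using q0 by simp
  moreover have "0 \<le> (\<Sum>i\<in>I. \<Sum>j\<in>I. (v i + s * e i) * M i j * (v j + s * e j))"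
    using psd by (simp add: psd_on_def)
  ultimately show "0 \<le> 2 * s * b + s\<^sup>2 * M i0 i0" by simp
qed

lemma psd_on_subset:
  assumes psd: "psd_on I M" and "I' \<subseteq> I" and "finite I"
  shows "psd_on I' M"
  unfolding psd_on_def
proof (intro conjI ballI allI)
  fix i j assume "i \<in> I'" "j \<in> I'"
  then show "M i j = M j i" using psd assms(2) by (auto simp: psd_on_def)
next
  fix v :: "'a \<Rightarrow> real"
  define v' where "v' i = (if i \<in> I' then v i else 0)" for i
  have fin': "finite I'" using assms(2,3) by (rule finite_subset)
  have "0 \<le> (\<Sum>i\<in>I. \<Sum>j\<in>I. v' i * M i j * v' j)" using psd by (simp add: psd_on_def)
  also have "\<dots> = (\<Sum>i\<in>I'. \<Sum>j\<in>I. v' i * M i j * v' j)"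
    using assms(2,3) by (intro sum.mono_neutral_right) (auto simp: v'_def)
  also have "\<dots> = (\<Sum>i\<in>I'. \<Sum>j\<in>I'. v' i * M i j * v' j)"
    using assms(2,3) by (intro sum.cong refl sum.mono_neutral_right) (auto simp: v'_def)
  also have "\<dots> = (\<Sum>i\<in>I'. \<Sum>j\<in>I'. v i * M i j * v j)"
    by (intro sum.cong refl) (auto simp: v'_def)
  finally show "0 \<le> (\<Sum>i\<in>I'. \<Sum>j\<in>I'. v i * M i j * v j)" .
qed

lemma finite_indep_col_cards:
  "finite I \<Longrightarrow> finite {card J | J. J \<subseteq> I \<and> cols_indep I M J}"
  by (rule finite_subset[of _ "{..card I}"]) (auto intro: card_mono)

lemma card_le_rank_on:
  "finite I \<Longrightarrow> J \<subseteq> I \<Longrightarrow> cols_indep I M J \<Longrightarrow> card J \<le> rank_on I M"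
  unfolding rank_on_def by (intro Max_ge finite_indep_col_cards) auto

lemma rank_on_attained:
  assumes "finite I"
  obtains J where "J \<subseteq> I" and "cols_indep I M J" and "card J = rank_on I M"
proof -
  have "card {} \<in> {card J | J. J \<subseteq> I \<and> cols_indep I M J}"
    by (auto simp: cols_indep_def intro!: exI[of _ "{}"])
  then have "rank_on I M \<in> {card J | J. J \<subseteq> I \<and> cols_indep I M J}"
    unfolding rank_on_def by (intro Max_in finite_indep_col_cards[OF assms]) auto
  then show thesis using that by auto
qed

lemma maximal_indep_cols_expansion:
  assumes fin: "finite I" and J: "J \<subseteq> I" and indep: "cols_indep I M J"
    and rank: "card J = rank_on I M" and \<alpha>: "\<alpha> \<in> I"
  shows "\<exists>co. (\<forall>j. j \<notin> J \<longrightarrow> co j = 0) \<and> (\<alpha> \<in> J \<longrightarrow> co = (\<lambda>j. if j = \<alpha> then 1 else 0)) \<and>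
    (\<forall>\<rho>\<in>I. M \<rho> \<alpha> = (\<Sum>j\<in>J. co j * M \<rho> j))"
proof (cases "\<alpha> \<in> J")
  case True
  have "finite J" using J fin by (rule finite_subset)
  then show ?thesis
    by (intro exI[of _ "\<lambda>j. if j = \<alpha> then 1 else 0"]) (simp add: True sum_delta_mult)
next
  case False
  have "finite J" using J fin by (rule finite_subset)
  have "\<not> cols_indep I M (insert \<alpha> J)"
    using card_le_rank_on[OF fin, of "insert \<alpha> J" M] False \<open>finite J\<close> rank J \<alpha> by auto
  then obtain c where c: "\<And>i. i \<in> I \<Longrightarrow> c \<alpha> * M i \<alpha> + (\<Sum>j\<in>J. c j * M i j) = 0"
    and c_nz: "\<exists>j\<in>insert \<alpha> J. c j \<noteq> 0"
    using False \<open>finite J\<close> unfolding cols_indep_def by auto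
  have "c \<alpha> \<noteq> 0"
  proof
    assume "c \<alpha> = 0"
    then have "\<forall>j\<in>J. c j = 0" using c indep unfolding cols_indep_def by simp
    then show False using c_nz \<open>c \<alpha> = 0\<close> by auto
  qed
  define co where "co j = (if j \<in> J then - c j / c \<alpha> else 0)" for j
  have "M \<rho> \<alpha> = (\<Sum>j\<in>J. co j * M \<rho> j)" if "\<rho> \<in> I" for \<rho>
  proof -
    have "c \<alpha> * M \<rho> \<alpha> = - (\<Sum>j\<in>J. c j * M \<rho> j)" using c[OF that] by (simp add: eq_neg_iff_add_eq_0)
    then have "M \<rho> \<alpha> = - (\<Sum>j\<in>J. c j * M \<rho> j) / c \<alpha>" using \<open>c \<alpha> \<noteq> 0\<close> by (simp add: field_simps)
    also have "\<dots> = (\<Sum>j\<in>J. co j * M \<rho> j)"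
      by (simp add: co_def sum_divide_distrib sum_negf[symmetric])
    finally show ?thesis .
  qed
  then show ?thesis using False by (intro exI[of _ co]) (simp add: co_def)
qed

lemma psd_indep_cols_pos:
  assumes psd: "psd_on I M" and fin: "finite I" and J: "J \<subseteq> I" and indep: "cols_indep I M J"
    and x: "x \<in> supp_on J" and "x \<noteq> 0"
  shows "0 < gram_form J M x x"
proof -
  have x0: "\<And>l. l \<notin> J \<Longrightarrow> x l = 0" using x by (simp add: supp_on_def)
  have eq: "gram_form J M x x = (\<Sum>i\<in>I. \<Sum>j\<in>I. x i * M i j * x j)"
  proof -
    have "gram_form J M x x = (\<Sum>i\<in>J. \<Sum>j\<in>I. x i * M i j * x j)"
      unfolding gram_form_def using J fin x0 by (intro sum.cong refl sum.mono_neutral_left) auto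
    also have "\<dots> = (\<Sum>i\<in>I. \<Sum>j\<in>I. x i * M i j * x j)"
      using J fin x0 by (intro sum.mono_neutral_left) auto
    finally show ?thesis .
  qed
  show ?thesis
  proof (rule ccontr)
    assume "\<not> 0 < gram_form J M x x"
    moreover have "0 \<le> (\<Sum>i\<in>I. \<Sum>j\<in>I. x i * M i j * x j)" using psd by (simp add: psd_on_def)
    ultimately have q0: "(\<Sum>i\<in>I. \<Sum>j\<in>I. x i * M i j * x j) = 0" using eq by linarith
    have "(\<Sum>j\<in>J. x j * M i j) = 0" if "i \<in> I" for i
    proof -
      have "(\<Sum>j\<in>J. x j * M i j) = (\<Sum>j\<in>I. x j * M i j)"
        using J fin x0 by (intro sum.mono_neutral_left) auto
      also have "\<dots> = (\<Sum>j\<in>I. M i j * x j)" by (simp add: mult.commute)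
      also have "\<dots> = 0" by (rule psd_on_kernel[OF psd fin that q0])
      finally show ?thesis .
    qed
    then have "\<forall>j\<in>J. x j = 0" using indep unfolding cols_indep_def by blast
    then show False using x0 \<open>x \<noteq> 0\<close> by (auto simp: fun_eq_iff)
  qed
qed

lemma quadratic_form_of_rank_one_sum:
  fixes Q :: "'b \<Rightarrow> real"
  shows "(\<Sum>\<beta>\<in>B. \<Sum>\<gamma>\<in>B. Q \<beta> * (\<Sum>u\<in>K. f u * e \<beta> u * e \<gamma> u) * Q \<gamma>) =
    (\<Sum>u\<in>K. f u * (\<Sum>\<beta>\<in>B. Q \<beta> * e \<beta> u)\<^sup>2)"
proof -
  have "(\<Sum>u\<in>K. f u * (\<Sum>\<beta>\<in>B. Q \<beta> * e \<beta> u)\<^sup>2) =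
      (\<Sum>u\<in>K. \<Sum>\<beta>\<in>B. \<Sum>\<gamma>\<in>B. Q \<beta> * (f u * e \<beta> u * e \<gamma> u) * Q \<gamma>)"
    by (simp add: power2_eq_square sum_product sum_distrib_left mult_ac)
  also have "\<dots> = (\<Sum>\<beta>\<in>B. \<Sum>u\<in>K. \<Sum>\<gamma>\<in>B. Q \<beta> * (f u * e \<beta> u * e \<gamma> u) * Q \<gamma>)"
    by (rule sum.swap)
  also have "\<dots> = (\<Sum>\<beta>\<in>B. \<Sum>\<gamma>\<in>B. \<Sum>u\<in>K. Q \<beta> * (f u * e \<beta> u * e \<gamma> u) * Q \<gamma>)"
    by (intro sum.cong refl) (rule sum.swap)
  finally show ?thesis by (simp add: sum_distrib_left sum_distrib_right)
qed

section \<open>Flat moment vectors are atomic\<close>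

locale flat_moments =
  fixes z :: "('r::finite \<Rightarrow> nat) \<Rightarrow> real" and t :: nat and J :: "('r \<Rightarrow> nat) set"
    and a :: "('r \<Rightarrow> nat) \<Rightarrow> ('r \<Rightarrow> nat) \<Rightarrow> real"
  assumes t_pos: "1 \<le> t"
    and J_subset: "J \<subseteq> mons (t - 1)"
    and column_expansion:
      "\<And>\<alpha> \<rho>. \<alpha> \<in> mons t \<Longrightarrow> \<rho> \<in> mons t \<Longrightarrow> z (\<rho> + \<alpha>) = (\<Sum>j\<in>J. a \<alpha> j * z (\<rho> + j))"
    and coeffs_basis: "\<And>\<alpha>. \<alpha> \<in> J \<Longrightarrow> a \<alpha> = (\<lambda>j. if j = \<alpha> then 1 else 0)"
    and coeffs_supp: "\<And>\<alpha> j. j \<notin> J \<Longrightarrow> a \<alpha> j = 0"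
    and gram_pos: "\<And>x. x \<in> supp_on J \<Longrightarrow> x \<noteq> 0 \<Longrightarrow> 0 < gram_form J (\<lambda>j l. z (j + l)) x x"
begin

lemma finite_J: "finite J"
  using J_subset finite_mons by (rule finite_subset)

sublocale pos_def_form J "\<lambda>j l. z (j + l)"
  by unfold_locales (auto simp: finite_J add.commute gram_pos)

lemma J_subset_mons: "J \<subseteq> mons t"
  using J_subset mons_mono[of "t - 1" t] by auto

lemma coeffs_supp_on: "a \<alpha> \<in> supp_on J"
  by (simp add: supp_on_def coeffs_supp)

lemma form_coeffs: "\<alpha> \<in> mons t \<Longrightarrow> form (a \<alpha>) y = (\<Sum>l\<in>J. y l * z (l + \<alpha>))"
  unfolding gram_form_def
  by (subst sum.swap) (use J_subset_mons in \<open>auto simp: sum_distrib_left algebra_simps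
      column_expansion add.commute intro!: sum.cong\<close>)

lemma form_coeffs_basis: "\<alpha> \<in> mons t \<Longrightarrow> \<gamma> \<in> J \<Longrightarrow> form (a \<alpha>) (a \<gamma>) = z (\<gamma> + \<alpha>)"
  by (simp add: form_coeffs coeffs_basis finite_J of_bool_def[symmetric])

lemma supp_on_expansion: "x \<in> supp_on J \<Longrightarrow> x = (\<Sum>\<gamma>\<in>J. fscale (x \<gamma>) (a \<gamma>))"
proof (rule ext)
  fix l assume "x \<in> supp_on J"
  have "(\<Sum>\<gamma>\<in>J. fscale (x \<gamma>) (a \<gamma>)) l = (\<Sum>\<gamma>\<in>J. x \<gamma> * (if l = \<gamma> then 1 else 0))"
    by (simp add: sum_fun_apply coeffs_basis)
  also have "\<dots> = x l"
    using \<open>x \<in> supp_on J\<close>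
    by (cases "l \<in> J") (simp_all add: finite_J supp_on_def if_distrib[of "\<lambda>c. _ * c"] cong: if_cong)
  finally show "x l = (\<Sum>\<gamma>\<in>J. fscale (x \<gamma>) (a \<gamma>)) l" by simp
qed

lemma eq_zero_if_orthogonal_coeffs:
  assumes x: "x \<in> supp_on J" and "\<And>\<gamma>. \<gamma> \<in> J \<Longrightarrow> form x (a \<gamma>) = 0"
  shows "x = 0"
proof -
  have "form x x = form x (\<Sum>\<gamma>\<in>J. fscale (x \<gamma>) (a \<gamma>))" using supp_on_expansion[OF x] by simp
  also have "\<dots> = 0" by (simp add: gram_form_sum_right gram_form_fscale_right assms(2))
  finally show ?thesis using form_nonpos_imp_zero[OF x] by simp
qed

definition mult_op :: "'r \<Rightarrow> (('r \<Rightarrow> nat) \<Rightarrow> real) \<Rightarrow> ('r \<Rightarrow> nat) \<Rightarrow> real" where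
  "mult_op i x = (\<lambda>l. \<Sum>j\<in>J. x j * a (j + exp_var i) l)"

lemma mult_op_supp_on: "mult_op i x \<in> supp_on J"
  by (simp add: mult_op_def supp_on_def coeffs_supp)

lemma J_add_exp_var: "j \<in> J \<Longrightarrow> j + exp_var i \<in> mons t"
  using J_subset mons_add_exp_var[OF _ t_pos] by auto

lemma form_mult_op: "form (mult_op i x) y = (\<Sum>j\<in>J. x j * (\<Sum>l\<in>J. y l * z (l + (j + exp_var i))))"
proof -
  have "mult_op i x = (\<Sum>j\<in>J. fscale (x j) (a (j + exp_var i)))"
    by (simp add: mult_op_def fun_eq_iff sum_fun_apply)
  then show ?thesis
    by (simp add: gram_form_sum_left gram_form_fscale_left form_coeffs[OF J_add_exp_var])
qed

lemma self_adjoint_mult_op: "self_adjoint (mult_op i)"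
  unfolding self_adjoint_def
proof (intro conjI ballI)
  show "linear_op (mult_op i)"
    by (simp add: linear_op_def mult_op_def fun_eq_iff sum.distrib algebra_simps sum_distrib_left)
  fix x y
  show "mult_op i x \<in> supp_on J" by (rule mult_op_supp_on)
  have "form x (mult_op i y) = form (mult_op i y) x" by (rule form_sym)
  also have "\<dots> = (\<Sum>l\<in>J. y l * (\<Sum>j\<in>J. x j * z (j + (l + exp_var i))))" by (rule form_mult_op)
  also have "\<dots> = (\<Sum>j\<in>J. x j * (\<Sum>l\<in>J. y l * z (l + (j + exp_var i))))"
    by (simp add: sum_distrib_left algebra_simps) (subst sum.swap, simp add: ac_simps)
  finally show "form (mult_op i x) y = form x (mult_op i y)" by (simp add: form_mult_op)
qed

lemma mult_op_coeffs: "\<beta> \<in> mons (t - 1) \<Longrightarrow> mult_op i (a \<beta>) = a (\<beta> + exp_var i)"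
proof -
  assume \<beta>: "\<beta> \<in> mons (t - 1)"
  then have "\<beta> \<in> mons t" using mons_mono[of "t - 1" t] by auto
  have "mult_op i (a \<beta>) - a (\<beta> + exp_var i) = 0"
  proof (rule eq_zero_if_orthogonal_coeffs)
    show "mult_op i (a \<beta>) - a (\<beta> + exp_var i) \<in> supp_on J"
      by (intro supp_on_diff mult_op_supp_on coeffs_supp_on)
    fix \<gamma> assume \<gamma>: "\<gamma> \<in> J"
    have "form (mult_op i (a \<beta>)) (a \<gamma>) = (\<Sum>j\<in>J. a \<beta> j * z (\<gamma> + (j + exp_var i)))"
      using \<gamma> by (simp add: form_mult_op coeffs_basis finite_J of_bool_def[symmetric])
    also have "\<dots> = z (\<gamma> + exp_var i + \<beta>)"
      using column_expansion[OF \<open>\<beta> \<in> mons t\<close> J_add_exp_var[OF \<gamma>]] by (simp add: ac_simps)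
    also have "\<dots> = form (a (\<beta> + exp_var i)) (a \<gamma>)"
      using form_coeffs_basis[OF mons_add_exp_var[OF \<beta> t_pos] \<gamma>] by (simp add: ac_simps)
    finally show "form (mult_op i (a \<beta>) - a (\<beta> + exp_var i)) (a \<gamma>) = 0"
      by (simp add: gram_form_diff_left)
  qed
  then show ?thesis by simp
qed

lemma mult_op_commute: "mult_op i (mult_op k x) = mult_op k (mult_op i x)"
proof -
  have *: "form (mult_op i (mult_op k x)) (a \<gamma>) = (\<Sum>j\<in>J. x j * z (\<gamma> + exp_var i + (j + exp_var k)))"
    if \<gamma>: "\<gamma> \<in> J" for i k \<gamma>
  proof -
    have "\<gamma> \<in> mons (t - 1)" using \<gamma> J_subset by auto
    have "form (mult_op i (mult_op k x)) (a \<gamma>) = form (a (\<gamma> + exp_var i)) (mult_op k x)"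
      using self_adjointD(3)[OF self_adjoint_mult_op mult_op_supp_on coeffs_supp_on]
      by (simp add: mult_op_coeffs[OF \<open>\<gamma> \<in> mons (t - 1)\<close>] form_sym)
    also have "\<dots> = (\<Sum>l\<in>J. (\<Sum>j\<in>J. x j * a (j + exp_var k) l) * z (l + (\<gamma> + exp_var i)))"
      by (simp add: form_coeffs[OF J_add_exp_var[OF \<gamma>]] mult_op_def)
    also have "\<dots> = (\<Sum>j\<in>J. x j * (\<Sum>l\<in>J. a (j + exp_var k) l * z (\<gamma> + exp_var i + l)))"
      by (simp add: sum_distrib_left sum_distrib_right algebra_simps ac_simps) (subst sum.swap, simp)
    also have "\<dots> = (\<Sum>j\<in>J. x j * z (\<gamma> + exp_var i + (j + exp_var k)))"
      by (intro sum.cong refl) (simp add: column_expansion[OF J_add_exp_var J_add_exp_var[OF \<gamma>]])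
    finally show ?thesis .
  qed
  have "mult_op i (mult_op k x) - mult_op k (mult_op i x) = 0"
  proof (rule eq_zero_if_orthogonal_coeffs)
    show "mult_op i (mult_op k x) - mult_op k (mult_op i x) \<in> supp_on J"
      by (intro supp_on_diff mult_op_supp_on)
    fix \<gamma> assume "\<gamma> \<in> J"
    then show "form (mult_op i (mult_op k x) - mult_op k (mult_op i x)) (a \<gamma>) = 0"
      by (simp add: gram_form_diff_left * ac_simps)
  qed
  then show ?thesis by simp
qed

lemma joint_decomposition_of_one: "\<exists>K w. joint_eigen_decomposition mult_op UNIV (a 0) K w"
  by (rule joint_eigen_decomposition_exists) (simp_all add: self_adjoint_mult_op mult_op_commute coeffs_supp_on)

end

lemma flat_moments_exist:
  fixes z :: "('r::finite \<Rightarrow> nat) \<Rightarrow> real"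
  assumes psd: "psd_on (mons k) (moment_mat z)" and t: "1 \<le> t" "t \<le> k"
    and rank: "rank_on (mons t) (moment_mat z) = rank_on (mons (t - 1)) (moment_mat z)"
  obtains J a where "flat_moments z t J a"
proof -
  let ?M = "moment_mat z"
  have M: "?M \<beta> \<gamma> = z (\<beta> + \<gamma>)" for \<beta> \<gamma> by (simp add: moment_mat_def plus_fun_def)
  have psd_t: "psd_on (mons t) ?M" using psd_on_subset[OF psd mons_mono[OF t(2)] finite_mons] .
  have sub: "mons (t - 1) \<subseteq> mons t" by (rule mons_mono) simp
  obtain J where J: "J \<subseteq> mons (t - 1)" "cols_indep (mons (t - 1)) ?M J"
    "card J = rank_on (mons (t - 1)) ?M"
    using rank_on_attained[OF finite_mons] by blast
  \<comment> \<open>by flatness \<open>card J = rank M\<^sub>t\<close>, so the columns \<open>J\<close> span all columns of \<open>M\<^sub>t\<close>\<close>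
  have indep: "cols_indep (mons t) ?M J" using J(2) sub unfolding cols_indep_def by blast
  have J_t: "J \<subseteq> mons t" using J(1) sub by blast
  have "\<forall>\<alpha>\<in>mons t. \<exists>co. (\<forall>j. j \<notin> J \<longrightarrow> co j = 0) \<and> (\<alpha> \<in> J \<longrightarrow> co = (\<lambda>j. if j = \<alpha> then 1 else 0)) \<and>
      (\<forall>\<rho>\<in>mons t. ?M \<rho> \<alpha> = (\<Sum>j\<in>J. co j * ?M \<rho> j))"
    using maximal_indep_cols_expansion[OF finite_mons J_t indep] J(3) rank by simp
  then obtain co where co: "\<forall>\<alpha>\<in>mons t. (\<forall>j. j \<notin> J \<longrightarrow> co \<alpha> j = 0) \<and>
      (\<alpha> \<in> J \<longrightarrow> co \<alpha> = (\<lambda>j. if j = \<alpha> then 1 else 0)) \<and> (\<forall>\<rho>\<in>mons t. ?M \<rho> \<alpha> = (\<Sum>j\<in>J. co \<alpha> j * ?M \<rho> j))"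
    by (rule bchoice[elim_format]) blast
  define a where "a \<alpha> = (if \<alpha> \<in> mons t then co \<alpha> else (\<lambda>_. 0))" for \<alpha>
  have "flat_moments z t J a"
  proof
    fix \<alpha> \<rho> :: "'r \<Rightarrow> nat" assume "\<alpha> \<in> mons t" "\<rho> \<in> mons t"
    then show "z (\<rho> + \<alpha>) = (\<Sum>j\<in>J. a \<alpha> j * z (\<rho> + j))" using co by (simp add: a_def M)
  next
    fix x :: "('r \<Rightarrow> nat) \<Rightarrow> real" assume "x \<in> supp_on J" "x \<noteq> 0"
    then show "0 < gram_form J (\<lambda>j l. z (j + l)) x x"
      using psd_indep_cols_pos[OF psd_t finite_mons J_t indep] M by (metis (no_types, lifting) ext)
  qed (use t J(1) J_t co in \<open>auto simp: a_def\<close>)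
  then show thesis by (rule that)
qed

locale atomic_flat_moments = flat_moments z t J a
  for z :: "('r::finite \<Rightarrow> nat) \<Rightarrow> real" and t J a +
  fixes K :: "('r \<Rightarrow> real) set" and w :: "('r \<Rightarrow> real) \<Rightarrow> ('r \<Rightarrow> nat) \<Rightarrow> real"
  assumes atoms: "joint_eigen_decomposition mult_op UNIV (a 0) K w"
begin

lemma finite_K: "finite K"
  and one_atomic: "a 0 = (\<Sum>u\<in>K. w u)"
  and atom_supp_on: "u \<in> K \<Longrightarrow> w u \<in> supp_on J"
  and atom_eigvec: "u \<in> K \<Longrightarrow> mult_op i (w u) = fscale (u i) (w u)"
  using atoms by (auto simp: joint_eigen_decomposition_def)

lemma coeffs_atomic: "\<beta> \<in> mons t \<Longrightarrow> a \<beta> = (\<Sum>u\<in>K. fscale (monom_eval \<beta> (\<chi> i. u i)) (w u))"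
proof (induction "mdeg \<beta>" arbitrary: \<beta>)
  case 0
  then have "\<beta> = 0" by (simp add: mdeg_eq_0_iff)
  then show ?case by (simp only: one_atomic monom_eval_zero fscale_simps(3))
next
  case (Suc n)
  then obtain \<beta>' i where \<beta>: "\<beta> = \<beta>' + exp_var i" and "mdeg \<beta>' = n"
    by (metis mdeg_Suc_obtain_exp_var)
  then have \<beta>': "\<beta>' \<in> mons (t - 1)" using Suc.prems Suc.hyps(2) by (simp add: mons_def)
  then have "\<beta>' \<in> mons t" using mons_mono[of "t - 1" t] by auto
  have lin: "linear_op (mult_op i)" using self_adjointD(1)[OF self_adjoint_mult_op] .
  have "a \<beta> = mult_op i (a \<beta>')" unfolding \<beta> by (rule mult_op_coeffs[OF \<beta>', symmetric])
  also have "\<dots> = (\<Sum>u\<in>K. fscale (monom_eval \<beta>' (\<chi> i. u i)) (fscale (u i) (w u)))"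
    unfolding Suc.hyps(1)[OF \<open>mdeg \<beta>' = n\<close>[symmetric] \<open>\<beta>' \<in> mons t\<close>] linear_op_sum[OF lin]
      linear_op_fscale[OF lin]
    by (intro sum.cong refl) (simp add: atom_eigvec)
  also have "\<dots> = (\<Sum>u\<in>K. fscale (monom_eval \<beta> (\<chi> i. u i)) (w u))"
    unfolding \<beta> by (intro sum.cong refl) (simp add: fscale_fscale monom_eval_add monom_eval_exp_var)
  finally show ?case .
qed

lemma atoms_orthogonal: "u \<in> K \<Longrightarrow> u' \<in> K \<Longrightarrow> u \<noteq> u' \<Longrightarrow> form (w u) (w u') = 0"
proof -
  assume u: "u \<in> K" and u': "u' \<in> K" and "u \<noteq> u'"
  then obtain i where "u i \<noteq> u' i" by (auto simp: fun_eq_iff)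
  then show ?thesis
    by (rule self_adjoint_eigvecs_orthogonal[OF self_adjoint_mult_op atom_supp_on[OF u] atom_supp_on[OF u']
          atom_eigvec[OF u] atom_eigvec[OF u']])
qed

definition weight :: "('r \<Rightarrow> real) \<Rightarrow> real" where
  "weight u = form (w u) (w u)"

lemma weight_nonneg: "u \<in> K \<Longrightarrow> 0 \<le> weight u"
  unfolding weight_def by (rule form_nonneg[OF atom_supp_on])

lemma form_atomic_combination:
  assumes "u' \<in> K"
  shows "form (\<Sum>u\<in>K. fscale (c u) (w u)) (w u') = c u' * weight u'"
proof -
  have "form (\<Sum>u\<in>K. fscale (c u) (w u)) (w u') = (\<Sum>u\<in>K. if u = u' then c u * weight u else 0)"
    unfolding gram_form_sum_left gram_form_fscale_left
    by (intro sum.cong refl) (auto simp: weight_def atoms_orthogonal assms)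
  also have "\<dots> = c u' * weight u'" using finite_K assms by simp
  finally show ?thesis .
qed

lemma moment_atomic: "mdeg \<alpha> \<le> 2 * t \<Longrightarrow> z \<alpha> = (\<Sum>u\<in>K. weight u * monom_eval \<alpha> (\<chi> i. u i))"
proof -
  assume "mdeg \<alpha> \<le> 2 * t"
  then obtain \<beta> \<gamma> where \<alpha>: "\<alpha> = \<beta> + \<gamma>" and \<beta>: "\<beta> \<in> mons t" and \<gamma>: "\<gamma> \<in> mons t"
    by (rule mdeg_le_double_split)
  have "z \<alpha> = form (a \<beta>) (a \<gamma>)"
    using column_expansion[OF \<gamma> \<beta>] form_coeffs[OF \<beta>, of "a \<gamma>"] by (simp add: \<alpha> ac_simps)
  also have "\<dots> = (\<Sum>u\<in>K. monom_eval \<gamma> (\<chi> i. u i) * form (a \<beta>) (w u))"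
    by (simp add: coeffs_atomic[OF \<gamma>] gram_form_sum_right gram_form_fscale_right)
  also have "\<dots> = (\<Sum>u\<in>K. weight u * monom_eval \<alpha> (\<chi> i. u i))"
    by (intro sum.cong refl)
      (simp add: coeffs_atomic[OF \<beta>] form_atomic_combination \<alpha> monom_eval_add ac_simps)
  finally show ?thesis .
qed

lemma localizing_form_atomic:
  "(\<Sum>\<beta>\<in>J. \<Sum>\<gamma>\<in>J. Q \<beta> * loc_mat Gam mu Lam z \<beta> \<gamma> * Q \<gamma>) =
    (\<Sum>u\<in>K. weight u * gfun Gam mu Lam (\<chi> i. u i) * (\<Sum>\<beta>\<in>J. Q \<beta> * monom_eval \<beta> (\<chi> i. u i))\<^sup>2)"
proof -
  have "loc_mat Gam mu Lam z \<beta> \<gamma> = (\<Sum>u\<in>K. weight u * gfun Gam mu Lam (\<chi> i. u i) *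
      monom_eval \<beta> (\<chi> i. u i) * monom_eval \<gamma> (\<chi> i. u i))" if "\<beta> \<in> J" "\<gamma> \<in> J" for \<beta> \<gamma>
  proof -
    have "mdeg \<beta> \<le> t - 1" "mdeg \<gamma> \<le> t - 1" using that J_subset by (auto simp: mons_def)
    then have z: "z (\<lambda>i. \<alpha> i + \<beta> i + \<gamma> i) = (\<Sum>u\<in>K. weight u * monom_eval (\<alpha> + \<beta> + \<gamma>) (\<chi> i. u i))"
      if "\<alpha> \<in> mons 2" for \<alpha>
    proof -
      have "(\<lambda>i. \<alpha> i + \<beta> i + \<gamma> i) = \<alpha> + \<beta> + \<gamma>" by (simp add: fun_eq_iff)
      moreover have "mdeg (\<alpha> + \<beta> + \<gamma>) \<le> 2 * t"
        using that t_pos \<open>mdeg \<beta> \<le> t - 1\<close> \<open>mdeg \<gamma> \<le> t - 1\<close> by (simp only: mdeg_add mons_def) simp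
      ultimately show ?thesis using moment_atomic by simp
    qed
    have "loc_mat Gam mu Lam z \<beta> \<gamma> = (\<Sum>u\<in>K. weight u * monom_eval \<beta> (\<chi> i. u i) * monom_eval \<gamma> (\<chi> i. u i) *
        (\<Sum>\<alpha>\<in>mons 2. gpoly Gam mu Lam \<alpha> * monom_eval \<alpha> (\<chi> i. u i)))"
      unfolding loc_mat_def
      by (simp add: z monom_eval_add sum_distrib_left sum_distrib_right mult_ac cong: sum.cong)
        (rule sum.swap)
    moreover have "(\<Sum>\<alpha>\<in>mons 2. gpoly Gam mu Lam \<alpha> * monom_eval \<alpha> \<xi>) = gfun Gam mu Lam \<xi>" for \<xi>
      using peval_gpoly by (simp add: peval_def)
    ultimately show ?thesis by (simp add: mult_ac)
  qed
  then have "(\<Sum>\<beta>\<in>J. \<Sum>\<gamma>\<in>J. Q \<beta> * loc_mat Gam mu Lam z \<beta> \<gamma> * Q \<gamma>) =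
      (\<Sum>\<beta>\<in>J. \<Sum>\<gamma>\<in>J. Q \<beta> * (\<Sum>u\<in>K. weight u * gfun Gam mu Lam (\<chi> i. u i) *
        monom_eval \<beta> (\<chi> i. u i) * monom_eval \<gamma> (\<chi> i. u i)) * Q \<gamma>)"
    by simp
  also have "\<dots> = (\<Sum>u\<in>K. weight u * gfun Gam mu Lam (\<chi> i. u i) *
      (\<Sum>\<beta>\<in>J. Q \<beta> * monom_eval \<beta> (\<chi> i. u i))\<^sup>2)"
    by (rule quadratic_form_of_rank_one_sum)
  finally show ?thesis .
qed

lemma atom_in_Uset:
  assumes loc_psd: "psd_on (mons (k - 1)) (loc_mat Gam mu Lam z)" and "t \<le> k"
    and u0: "u0 \<in> K" and pos: "0 < weight u0"
  shows "(\<chi> i. u0 i) \<in> Uset Gam mu Lam"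
proof -
  define g where "g u = gfun Gam mu Lam (\<chi> i. u i)" for u
  define Q where "Q = w u0"
  define ev where "ev u = (\<Sum>\<beta>\<in>J. Q \<beta> * monom_eval \<beta> (\<chi> i. u i))" for u
  have Q: "Q \<in> supp_on J" using atom_supp_on[OF u0] by (simp add: Q_def)
  have "weight u * ev u = (if u = u0 then weight u0 else 0)" if u: "u \<in> K" for u
  proof -
    have "weight u * ev u = (\<Sum>\<beta>\<in>J. Q \<beta> * form (a \<beta>) (w u))"
      using J_subset_mons u
      by (simp add: ev_def sum_distrib_left coeffs_atomic form_atomic_combination subset_iff mult_ac)
    also have "\<dots> = form Q (w u)"
      by (subst (2) supp_on_expansion[OF Q]) (simp add: gram_form_sum_left gram_form_fscale_left)
    also have "\<dots> = (if u = u0 then weight u0 else 0)"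
      using atoms_orthogonal[OF u0 u] by (auto simp: Q_def weight_def)
    finally show ?thesis .
  qed
  note weight_ev = this
  have "ev u0 = 1" using weight_ev[OF u0] pos by simp
  have "mons (t - 1) \<subseteq> mons (k - 1)" using \<open>t \<le> k\<close> by (intro mons_mono) simp
  then have "J \<subseteq> mons (k - 1)" using J_subset by blast
  then have "0 \<le> (\<Sum>\<beta>\<in>J. \<Sum>\<gamma>\<in>J. Q \<beta> * loc_mat Gam mu Lam z \<beta> \<gamma> * Q \<gamma>)"
    using psd_on_subset[OF loc_psd _ finite_mons] by (simp add: psd_on_def)
  also have "\<dots> = (\<Sum>u\<in>K. g u * ev u * (weight u * ev u))"
    unfolding localizing_form_atomic g_def ev_def by (simp add: power2_eq_square mult_ac)
  also have "\<dots> = (\<Sum>u\<in>K. if u = u0 then g u0 * weight u0 else 0)"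
    using weight_ev \<open>ev u0 = 1\<close> by (intro sum.cong refl) auto
  also have "\<dots> = g u0 * weight u0" using u0 finite_K by simp
  finally have "0 \<le> g u0" using pos by (simp add: zero_le_mult_iff)
  then show ?thesis by (simp add: g_def Uset_def)
qed

end

lemma flat_moment_functional_nonneg:
  fixes z :: "('r::finite \<Rightarrow> nat) \<Rightarrow> real"
  assumes Sg: "Sg Gam mu Lam k z" and t: "1 \<le> t" "t \<le> k" and "d \<le> 2 * t"
    and rank: "rank_on (mons t) (moment_mat z) = rank_on (mons (t - 1)) (moment_mat z)"
    and p: "Pnonneg Gam mu Lam d p"
  shows "0 \<le> (\<Sum>\<alpha>\<in>mons d. p \<alpha> * z \<alpha>)"
proof -
  have psd: "psd_on (mons k) (moment_mat z)" and loc_psd: "psd_on (mons (k - 1)) (loc_mat Gam mu Lam z)"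
    using Sg by (auto simp: Sg_def)
  obtain J a where "flat_moments z t J a" using flat_moments_exist[OF psd t rank] .
  then interpret flat_moments z t J a .
  obtain K w where "joint_eigen_decomposition mult_op UNIV (a 0) K w"
    using joint_decomposition_of_one by blast
  then interpret atomic_flat_moments z t J a K w by unfold_locales
  have "(\<Sum>\<alpha>\<in>mons d. p \<alpha> * z \<alpha>) = (\<Sum>\<alpha>\<in>mons d. p \<alpha> * (\<Sum>u\<in>K. weight u * monom_eval \<alpha> (\<chi> i. u i)))"
    using \<open>d \<le> 2 * t\<close> by (intro sum.cong refl) (simp add: mons_def moment_atomic)
  also have "\<dots> = (\<Sum>u\<in>K. weight u * peval d p (\<chi> i. u i))"
    unfolding peval_def by (simp add: sum_distrib_left mult_ac) (rule sum.swap)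
  also have "\<dots> \<ge> 0"
  proof (rule sum_nonneg)
    fix u assume u: "u \<in> K"
    show "0 \<le> weight u * peval d p (\<chi> i. u i)"
    proof (cases "weight u = 0")
      case False
      then have "0 < weight u" using weight_nonneg[OF u] by simp
      then have "(\<chi> i. u i) \<in> Uset Gam mu Lam" by (rule atom_in_Uset[OF loc_psd t(2) u])
      then show ?thesis using p \<open>0 < weight u\<close> by (simp add: Pnonneg_def)
    qed simp
  qed
  finally show ?thesis .
qed

section \<open>Exactness of the relaxation\<close>

lemma deg_le_affpoly: "deg_le d (affpoly d A b x)"
  by (simp add: deg_le_def affpoly_def)

lemma SOS_feas_imp_P_feas:
  assumes "1 \<le> k" and "d \<le> 2 * k" and "SOS_feas k d A b X Gam mu Lam x"
  shows "P_feas d A b X Gam mu Lam x"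
  unfolding P_feas_def Pnonneg_def
proof (intro conjI ballI deg_le_affpoly)
  show "x \<in> X" using assms(3) by (simp add: SOS_feas_def)
  fix \<xi> assume "\<xi> \<in> Uset Gam mu Lam"
  then have "0 \<le> peval (2 * k) (affpoly d A b x) \<xi>"
    using QM_nonneg_on_Uset[OF assms(1)] assms(3) by (auto simp: SOS_feas_def)
  then show "0 \<le> peval d (affpoly d A b x) \<xi>" by (metis peval_deg_le[OF deg_le_affpoly assms(2)])
qed

lemma f_sos_eq_optimum: "SOS_optimizer k d A b c X Gam mu Lam x \<Longrightarrow> f_sos k d A b c X Gam mu Lam = c \<bullet> x"
  unfolding f_sos_def SOS_optimizer_def by (rule cInf_eq_minimum) auto

lemma f_mom_eq_optimum:
  "MOM_optimizer k d A b c X Gam mu Lam y z \<Longrightarrow> f_mom k d A b c X Gam mu Lam = mom_obj d b y"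
  unfolding f_mom_def MOM_optimizer_def by (rule cSup_eq_maximum) (auto intro!: image_eqI[of _ _ "(y, z)"])

lemma f_min_eq_optimum: "P_minimizer d A b c X Gam mu Lam x \<Longrightarrow> f_min d A b c X Gam mu Lam = c \<bullet> x"
  unfolding f_min_def P_minimizer_def by (rule cInf_eq_minimum) auto

lemma flat_weak_duality:
  assumes mom: "MOM_feas k d A c X Gam mu Lam y z" and x: "P_feas d A b X Gam mu Lam x"
    and t: "1 \<le> t" "t \<le> k" "d \<le> 2 * t"
    and rank: "rank_on (mons t) (moment_mat z) = rank_on (mons (t - 1)) (moment_mat z)"
  shows "mom_obj d b y \<le> c \<bullet> x"
proof -
  have dual: "c - (\<Sum>\<alpha>\<in>mons d. y \<alpha> *\<^sub>R A \<alpha>) \<in> dual_cone X" and y: "y = trunc d z"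
    and Sg: "Sg Gam mu Lam k z"
    using mom by (auto simp: MOM_feas_def)
  have "0 \<le> (c - (\<Sum>\<alpha>\<in>mons d. y \<alpha> *\<^sub>R A \<alpha>)) \<bullet> x"
    using dual x by (auto simp: dual_cone_def P_feas_def)
  then have "(\<Sum>\<alpha>\<in>mons d. y \<alpha> * (A \<alpha> \<bullet> x)) \<le> c \<bullet> x"
    by (simp add: inner_diff_left inner_sum_left)
  moreover have "0 \<le> (\<Sum>\<alpha>\<in>mons d. affpoly d A b x \<alpha> * z \<alpha>)"
    using flat_moment_functional_nonneg[OF Sg t rank] x by (simp add: P_feas_def)
  moreover have "(\<Sum>\<alpha>\<in>mons d. affpoly d A b x \<alpha> * z \<alpha>) =
      (\<Sum>\<alpha>\<in>mons d. y \<alpha> * (A \<alpha> \<bullet> x)) + (\<Sum>\<alpha>\<in>mons d. b \<alpha> * y \<alpha>)"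
    by (simp add: sum.distrib[symmetric] affpoly_def y trunc_def mons_def algebra_simps)
  ultimately show ?thesis by (simp add: mom_obj_def)
qed

theorem corollary3p2:
  fixes d k :: nat
    and A :: "('r::finite \<Rightarrow> nat) \<Rightarrow> real^'n"
    and b :: "('r \<Rightarrow> nat) \<Rightarrow> real"
    and c :: "real^'n"
    and X :: "(real^'n) set"
    and Gam :: real and mu :: "real^'r" and Lam :: "real^'r^'r"
    and xs :: "real^'n" and ys zs :: "('r \<Rightarrow> nat) \<Rightarrow> real"
  assumes "closed X" and "convex X"
    and "Gam > 0" and "pos_def_mat Lam"
    and "max ((d + 1) div 2) 1 \<le> k"
    and "SOS_optimizer k d A b c X Gam mu Lam xs"
    and "MOM_optimizer k d A b c X Gam mu Lam ys zs"
    and "f_sos k d A b c X Gam mu Lam = f_mom k d A b c X Gam mu Lam"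
    and "\<exists>t. max ((d + 1) div 2) 1 \<le> t \<and> t \<le> k \<and>
           rank_on (mons t) (moment_mat zs) = rank_on (mons (t - 1)) (moment_mat zs)"
  shows "P_minimizer d A b c X Gam mu Lam xs \<and> c \<bullet> xs = f_min d A b c X Gam mu Lam"
proof -
  obtain t where t: "max ((d + 1) div 2) 1 \<le> t" "t \<le> k"
    and rank: "rank_on (mons t) (moment_mat zs) = rank_on (mons (t - 1)) (moment_mat zs)"
    using assms(9) by blast
  have t_bounds: "1 \<le> t" "t \<le> k" "d \<le> 2 * t" using t by auto
  have xs: "P_feas d A b X Gam mu Lam xs"
    using assms(5,6) by (intro SOS_feas_imp_P_feas) (auto simp: SOS_optimizer_def)
  have "c \<bullet> xs = mom_obj d b ys"
    using assms(6,7,8) by (simp add: f_sos_eq_optimum f_mom_eq_optimum)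
  moreover have "mom_obj d b ys \<le> c \<bullet> x" if "P_feas d A b X Gam mu Lam x" for x
    using assms(7) that t_bounds rank by (intro flat_weak_duality) (auto simp: MOM_optimizer_def)
  ultimately have "P_minimizer d A b c X Gam mu Lam xs"
    using xs by (simp add: P_minimizer_def)
  then show ?thesis by (simp add: f_min_eq_optimum)
qed

end
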